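(* Let $E$ be a Banach space over $\mathbb{K}$ and $m,n\in\mathbb{N}$. The map $J^{m,n}_E\colon E\to\mathcal{P}(^m\mathcal{P}(^nE))$, $J^{m,n}_E(x)(q)=q(x)^m$, is a continuous $mn$-homogeneous polynomial and $\|J^{m,n}_E(x)\|=\|x\|^{mn}$ for every $x\in E$.
   Context: Banach spaces are over $\mathbb{K}=\mathbb{R}$ or $\mathbb{C}$. $\mathcal{P}(^jX)$ is the Banach space of continuous $j$-homogeneous scalar-valued polynomials on $X$ with the sup norm over the closed unit ball. *)

theory Defs
  imports "HOL-Analysis.Analysis"
begin

text \<open>A normed space over the scalar field 'k, given by a carrier set with
  explicit vector operations and norm (needed because spaces of polynomials
  are sets of functions, not types).\<close>
record ('v, 'k) kspace =
  spc_carrier :: "'v set"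
  spc_add :: "'v \<Rightarrow> 'v \<Rightarrow> 'v"
  spc_smul :: "'k \<Rightarrow> 'v \<Rightarrow> 'v"
  spc_norm :: "'v \<Rightarrow> real"

definition spc_diff :: "('v, 'k::real_normed_field) kspace \<Rightarrow> 'v \<Rightarrow> 'v \<Rightarrow> 'v" where
  "spc_diff V y x = spc_add V y (spc_smul V (-1) x)"

text \<open>A Banach space over 'k: a real Banach space 'e together with a compatible
  'k-scalar multiplication (vector space axioms, agreement with the real
  scalar multiplication, absolute homogeneity of the norm).\<close>
definition K_banach_scaling :: "('k::{real_normed_field, banach} \<Rightarrow> 'e::banach \<Rightarrow> 'e) \<Rightarrow> bool" where
  "K_banach_scaling smul \<longleftrightarrow>
     (\<forall>a b x. smul a (smul b x) = smul (a * b) x) \<and>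
     (\<forall>x. smul 1 x = x) \<and>
     (\<forall>a x y. smul a (x + y) = smul a x + smul a y) \<and>
     (\<forall>a b x. smul (a + b) x = smul a x + smul b x) \<and>
     (\<forall>r x. smul (of_real r) x = scaleR r x) \<and>
     (\<forall>a x. norm (smul a x) = norm a * norm x)"

definition Espace :: "('k \<Rightarrow> 'e \<Rightarrow> 'e) \<Rightarrow> ('e::banach, 'k) kspace" where
  "Espace smul = \<lparr>spc_carrier = UNIV, spc_add = (+), spc_smul = smul, spc_norm = norm\<rparr>"

definition Kspace :: "('k::real_normed_field, 'k) kspace" where
  "Kspace = \<lparr>spc_carrier = UNIV, spc_add = (+), spc_smul = (*), spc_norm = norm\<rparr>"

definition multilinear_map ::
  "('v, 'k::real_normed_field) kspace \<Rightarrow> ('w, 'k) kspace \<Rightarrow> nat \<Rightarrow> ('v list \<Rightarrow> 'w) \<Rightarrow> bool" where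
  "multilinear_map V W j A \<longleftrightarrow>
     (\<forall>xs. set xs \<subseteq> spc_carrier V \<and> length xs = j \<longrightarrow> A xs \<in> spc_carrier W) \<and>
     (\<forall>xs i a b c. set xs \<subseteq> spc_carrier V \<and> length xs = j \<and> i < j \<and>
        a \<in> spc_carrier V \<and> b \<in> spc_carrier V \<longrightarrow>
        A (xs[i := spc_add V a b]) = spc_add W (A (xs[i := a])) (A (xs[i := b])) \<and>
        A (xs[i := spc_smul V c a]) = spc_smul W c (A (xs[i := a])))"

definition hom_poly ::
  "('v, 'k::real_normed_field) kspace \<Rightarrow> ('w, 'k) kspace \<Rightarrow> nat \<Rightarrow> ('v \<Rightarrow> 'w) \<Rightarrow> bool" where
  "hom_poly V W j P \<longleftrightarrow>
     (\<exists>A. multilinear_map V W j A \<and> (\<forall>x\<in>spc_carrier V. P x = A (replicate j x)))"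

definition spc_continuous ::
  "('v, 'k::real_normed_field) kspace \<Rightarrow> ('w, 'k) kspace \<Rightarrow> ('v \<Rightarrow> 'w) \<Rightarrow> bool" where
  "spc_continuous V W P \<longleftrightarrow>
     (\<forall>x\<in>spc_carrier V. \<forall>e>0. \<exists>d>0. \<forall>y\<in>spc_carrier V.
        spc_norm V (spc_diff V y x) < d \<longrightarrow> spc_norm W (spc_diff W (P y) (P x)) < e)"

definition cont_hom_poly ::
  "('v, 'k::real_normed_field) kspace \<Rightarrow> ('w, 'k) kspace \<Rightarrow> nat \<Rightarrow> ('v \<Rightarrow> 'w) \<Rightarrow> bool" where
  "cont_hom_poly V W j P \<longleftrightarrow> hom_poly V W j P \<and> spc_continuous V W P"

definition poly_norm :: "('v, 'k::real_normed_field) kspace \<Rightarrow> ('v \<Rightarrow> 'k) \<Rightarrow> real" where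
  "poly_norm V P = Sup {norm (P x) | x. x \<in> spc_carrier V \<and> spc_norm V x \<le> 1}"

text \<open>Elements are taken extensional
  (zero outside the carrier of V) so that function equality is equality on V.\<close>
definition Pspace :: "('v, 'k::real_normed_field) kspace \<Rightarrow> nat \<Rightarrow> ('v \<Rightarrow> 'k, 'k) kspace" where
  "Pspace V j = \<lparr>spc_carrier = {P. cont_hom_poly V Kspace j P \<and> (\<forall>x. x \<notin> spc_carrier V \<longrightarrow> P x = 0)},
                 spc_add = (\<lambda>P Q x. P x + Q x),
                 spc_smul = (\<lambda>c P x. c * P x),
                 spc_norm = poly_norm V\<rparr>"

definition Jmap :: "('k \<Rightarrow> 'e \<Rightarrow> 'e) \<Rightarrow> nat \<Rightarrow> nat \<Rightarrow> 'e::banach \<Rightarrow> ('e \<Rightarrow> 'k::real_normed_field) \<Rightarrow> 'k" where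
  "Jmap smul m n x q = (if q \<in> spc_carrier (Pspace (Espace smul) n) then q x ^ m else 0)"

end

theory Submission
  imports Defs "HOL-Combinatorics.Multiset_Permutations"
begin

text \<open>\<open>J(x)\<close> is the diagonal of the \<open>m n\<close>-linear map sending \<open>x\<^sub>1, \<dots>, x\<^sub>m\<^sub>n\<close> to
  \<open>q \<mapsto> \<Prod>\<^sub>k Q\<^sub>q(k-th block of n arguments)\<close>, where \<open>Q\<^sub>q\<close> is the symmetric \<open>n\<close>-linear form of \<open>q\<close>
  given by the polarization formula; the polarization bound makes these maps continuous in \<open>q\<close>
  and makes the polynomials of norm \<open>\<le> 1\<close> uniformly Lipschitz on bounded sets, which gives
  continuity of \<open>J\<close>. For the norm, \<open>\<bar>q x\<bar>\<^sup>m \<le> \<parallel>q\<parallel>\<^sup>m \<parallel>x\<parallel>\<^sup>m\<^sup>n\<close>, with equality for \<open>q = \<phi>\<^sup>n\<close> where \<open>\<phi>\<close>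
  is a norming functional of \<open>x\<close>. The scalar field is an arbitrary real normed field, so this
  Hahn--Banach step first needs the Gelfand--Mazur theorem (\<open>K\<close> is \<open>\<real>\<close> or \<open>\<complex>\<close>), proved by the
  elementary argument that \<open>\<bar>a\<^sup>2 - 2 Re z a + \<bar>z\<bar>\<^sup>2\<bar>\<close> attains the minimum \<open>0\<close> over \<open>z \<in> \<complex>\<close>; over \<open>\<complex>\<close>
  a norming functional is the complexification of a real one.\<close>

section \<open>The Gelfand--Mazur theorem for real normed fields\<close>

text \<open>\<open>K[i]\<close> with \<open>i\<^sup>2 = -1\<close>. The real normed field \<open>K\<close> may already contain a square root of
  \<open>-1\<close>, so \<open>i\<close> is adjoined formally.\<close>
datatype 'a complexification = Cplx (cre: 'a) (cim: 'a)

instantiation complexification :: (comm_ring_1) comm_ring_1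
begin
definition "0 = Cplx 0 0"
definition "1 = Cplx 1 0"
definition "p + q = Cplx (cre p + cre q) (cim p + cim q)"
definition "p - q = Cplx (cre p - cre q) (cim p - cim q)"
definition "- p = Cplx (- cre p) (- cim p)"
definition "p * q = Cplx (cre p * cre q - cim p * cim q) (cre p * cim q + cim p * cre q)"
instance
  by standard (auto simp: zero_complexification_def one_complexification_def plus_complexification_def
      minus_complexification_def uminus_complexification_def times_complexification_def
      complexification.expand algebra_simps)
end

lemma complexification_simps [simp]:
  "cre 0 = 0" "cim 0 = 0" "cre 1 = 1" "cim 1 = 0"
  "cre (p + q) = cre p + cre q" "cim (p + q) = cim p + cim q"
  "cre (p - q) = cre p - cre q" "cim (p - q) = cim p - cim q"
  "cre (- p) = - cre p" "cim (- p) = - cim p"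
  "cre (p * q) = cre p * cre q - cim p * cim q" "cim (p * q) = cre p * cim q + cim p * cre q"
  by (auto simp: zero_complexification_def one_complexification_def plus_complexification_def
      minus_complexification_def uminus_complexification_def times_complexification_def)

lemma Cplx_real_power: "Cplx u 0 ^ k = Cplx (u ^ k) (0::'a::comm_ring_1)"
  by (induction k) (auto simp: complexification.expand)

lemma prod_list_Cplx_real: "(\<Prod>w\<leftarrow>ws. Cplx (f w) 0) = Cplx (\<Prod>w\<leftarrow>ws. f w) (0::'a::comm_ring_1)"
  by (induction ws) (auto simp: complexification.expand)

definition cplx_of_complex :: "complex \<Rightarrow> 'k::real_normed_field complexification" where
  "cplx_of_complex z = Cplx (of_real (Re z)) (of_real (Im z))"

lemma cplx_of_complex_add: "cplx_of_complex (a + b) = cplx_of_complex a + cplx_of_complex b"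
  by (simp add: cplx_of_complex_def complexification.expand)

definition cnorm :: "'k::real_normed_field complexification \<Rightarrow> real" where
  "cnorm p = norm (cre p) + norm (cim p)"

lemma cnorm_nonneg: "0 \<le> cnorm p"
  by (simp add: cnorm_def)

lemma cnorm_add: "cnorm (p + q) \<le> cnorm p + cnorm q"
  using norm_triangle_ineq[of "cre p" "cre q"] norm_triangle_ineq[of "cim p" "cim q"]
  by (simp add: cnorm_def)

lemma cnorm_mult: "cnorm (p * q) \<le> cnorm p * cnorm q"
proof -
  have "cnorm (p * q) \<le> (norm (cre p) * norm (cre q) + norm (cim p) * norm (cim q))
     + (norm (cre p) * norm (cim q) + norm (cim p) * norm (cre q))"
    unfolding cnorm_def complexification_simps
    by (intro add_mono order.trans[OF norm_triangle_ineq4] order.trans[OF norm_triangle_ineq])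
       (auto simp: norm_mult)
  also have "\<dots> = cnorm p * cnorm q"
    by (simp add: cnorm_def algebra_simps)
  finally show ?thesis .
qed

lemma cnorm_power: "cnorm (p ^ k) \<le> cnorm p ^ k"
proof (induction k)
  case (Suc k)
  have "cnorm (p ^ Suc k) \<le> cnorm p * cnorm (p ^ k)"
    using cnorm_mult[of p "p ^ k"] by simp
  also have "\<dots> \<le> cnorm p * cnorm p ^ k"
    using Suc by (intro mult_left_mono) (auto simp: cnorm_nonneg)
  finally show ?case by simp
qed (simp add: cnorm_def)

lemma norm_cre_le_cnorm: "norm (cre p) \<le> cnorm p"
  using norm_ge_zero[of "cim p"] by (simp add: cnorm_def)

lemma cnorm_power_mult_le:
  assumes "cnorm p \<le> B" "cnorm q \<le> C"
  shows "cnorm (p ^ N * q ^ N) \<le> (B * C) ^ N"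
proof -
  have "0 \<le> B"
    using assms(1) cnorm_nonneg order.trans by blast
  have "cnorm (p ^ N * q ^ N) \<le> cnorm p ^ N * cnorm q ^ N"
    by (meson cnorm_mult cnorm_power cnorm_nonneg mult_mono order.trans zero_le_power)
  also have "\<dots> \<le> B ^ N * C ^ N"
    using assms \<open>0 \<le> B\<close> by (intro mult_mono power_mono) (auto simp: cnorm_nonneg)
  finally show ?thesis
    by (simp add: power_mult_distrib)
qed

lemma cnorm_cplx_of_complex: "cnorm (cplx_of_complex w) \<le> 2 * cmod w"
  using abs_Re_le_cmod[of w] abs_Im_le_cmod[of w] by (simp add: cnorm_def cplx_of_complex_def)

definition complex_hom :: "(complex \<Rightarrow> 'r::comm_ring_1) \<Rightarrow> bool" where
  "complex_hom h \<longleftrightarrow> (\<forall>a b. h (a * b) = h a * h b) \<and> (\<forall>a. h (- a) = - h a) \<and> h 1 = 1"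

lemma complex_hom_power: "complex_hom h \<Longrightarrow> h (c ^ k) = h c ^ k"
  by (induction k) (auto simp: complex_hom_def)

lemma complex_hom_cplx_of_complex: "complex_hom cplx_of_complex"
  unfolding complex_hom_def cplx_of_complex_def by (auto simp: complexification.expand algebra_simps)

lemma complex_hom_cplx_of_complex_cnj: "complex_hom (\<lambda>z. cplx_of_complex (cnj z))"
  unfolding complex_hom_def cplx_of_complex_def by (auto simp: complexification.expand algebra_simps)

text \<open>Stated for every homomorphic image of the roots so that it applies in \<open>K[i]\<close> to both
  \<open>z\<close> and \<open>cnj z\<close>.\<close>
lemma power_diff_power_factorization:
  "\<exists>ws. length ws = 2 ^ r \<and> \<eta> \<in> set ws \<and>
     (\<forall>(h :: complex \<Rightarrow> 'r::comm_ring_1) y. complex_hom h \<longrightarrow>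
        (\<Prod>w\<leftarrow>ws. y - h w) = y ^ 2 ^ r - h \<eta> ^ 2 ^ r)"
proof (induction r arbitrary: \<eta>)
  case 0
  show ?case by (rule exI[of _ "[\<eta>]"]) auto
next
  case (Suc r)
  define M :: nat where "M = 2 ^ r"
  define \<zeta> where "\<zeta> = \<eta> * cis (pi / M)"
  have "\<zeta> ^ M = \<eta> ^ M * cis (pi / M) ^ M"
    by (simp add: \<zeta>_def power_mult_distrib)
  also have "cis (pi / M) ^ M = cis (real M * (pi / M))"
    by (rule Complex.DeMoivre)
  also have "real M * (pi / M) = pi"
    by (simp add: M_def)
  finally have \<zeta>_power: "\<zeta> ^ M = - (\<eta> ^ M)"
    by simp
  obtain ws1 where ws1: "length ws1 = M" "\<eta> \<in> set ws1"
    "\<forall>(h :: complex \<Rightarrow> 'r) y. complex_hom h \<longrightarrow> (\<Prod>w\<leftarrow>ws1. y - h w) = y ^ M - h \<eta> ^ M"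
    using Suc.IH[of \<eta>] unfolding M_def by blast
  obtain ws2 where ws2: "length ws2 = M"
    "\<forall>(h :: complex \<Rightarrow> 'r) y. complex_hom h \<longrightarrow> (\<Prod>w\<leftarrow>ws2. y - h w) = y ^ M - h \<zeta> ^ M"
    using Suc.IH[of \<zeta>] unfolding M_def by blast
  show ?case
  proof (rule exI[of _ "ws1 @ ws2"], intro conjI allI impI)
    show "length (ws1 @ ws2) = 2 ^ Suc r" "\<eta> \<in> set (ws1 @ ws2)"
      using ws1 ws2 by (simp_all add: M_def)
    fix h :: "complex \<Rightarrow> 'r" and y
    assume h: "complex_hom h"
    have "h \<zeta> ^ M = - (h \<eta> ^ M)"
      using \<zeta>_power h by (metis complex_hom_def complex_hom_power)
    moreover have "(\<Prod>w\<leftarrow>ws1 @ ws2. y - h w) = (y ^ M - h \<eta> ^ M) * (y ^ M - h \<zeta> ^ M)"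
      using ws1 ws2 h by simp
    ultimately have "(\<Prod>w\<leftarrow>ws1 @ ws2. y - h w) = (y ^ M) ^ 2 - (h \<eta> ^ M) ^ 2"
      by (simp add: algebra_simps power2_eq_square)
    then show "(\<Prod>w\<leftarrow>ws1 @ ws2. y - h w) = y ^ 2 ^ Suc r - h \<eta> ^ 2 ^ Suc r"
      by (simp add: M_def power_mult[symmetric] mult.commute)
  qed
qed

text \<open>\<open>quad a z = (a - z) (a - cnj z)\<close> is a monic real quadratic in \<open>a\<close>; an element of a real
  normed field is real or "complex" according to whether \<open>quad a\<close> has a real or a non-real
  zero, and \<open>quad_has_zero\<close> below shows that it always has one.\<close>
definition quad :: "'k::real_normed_field \<Rightarrow> complex \<Rightarrow> 'k" where
  "quad a z = a * a - of_real (2 * Re z) * a + of_real ((cmod z)\<^sup>2)"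

lemma quad_eq: "quad a z = (a - of_real (Re z)) * (a - of_real (Re z)) + of_real (Im z) * of_real (Im z)"
proof -
  have "(cmod z)\<^sup>2 = Re z * Re z + Im z * Im z"
    using cmod_power2[of z] by (simp add: power2_eq_square)
  then show ?thesis by (simp add: quad_def algebra_simps)
qed

lemma quad_factorization:
  "(Cplx a 0 - cplx_of_complex z) * (Cplx a 0 - cplx_of_complex (cnj z)) = Cplx (quad a z) 0"
  by (intro complexification.expand conjI) (simp_all add: cplx_of_complex_def quad_eq algebra_simps)

lemma continuous_on_norm_quad: "continuous_on UNIV (\<lambda>z. norm (quad a z))"
  unfolding quad_def by (intro continuous_intros)

lemma norm_quad_lower_bound: "(cmod z)\<^sup>2 - 2 * cmod z * norm a - (norm a)\<^sup>2 \<le> norm (quad a z)"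
proof -
  have "quad a z = of_real ((cmod z)\<^sup>2) - (of_real (2 * Re z) * a - a * a)"
    by (simp add: quad_def)
  then have "norm (of_real ((cmod z)\<^sup>2) :: 'a) - norm (of_real (2 * Re z) * a - a * a) \<le> norm (quad a z)"
    by (metis norm_triangle_ineq2)
  moreover have "norm (of_real (2 * Re z) * a - a * a) \<le> 2 * cmod z * norm a + (norm a)\<^sup>2"
  proof -
    have "2 * \<bar>Re z\<bar> * norm a \<le> 2 * cmod z * norm a"
      using abs_Re_le_cmod[of z] by (intro mult_right_mono) auto
    then show ?thesis
      using norm_triangle_ineq4[of "of_real (2 * Re z) * a" "a * a"]
      by (simp add: norm_mult power2_eq_square)
  qed
  ultimately show ?thesis
    by (simp only: norm_of_real)
qed

lemma prod_list_map_mult: "(\<Prod>w\<leftarrow>ws. f w * g w) = (\<Prod>w\<leftarrow>ws. f w) * (\<Prod>w\<leftarrow>ws. g w :: 'a::comm_monoid_mult)"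
  by (induction ws) (auto simp: algebra_simps)

lemma prod_list_map_remove1:
  "x \<in> set xs \<Longrightarrow> (\<Prod>w\<leftarrow>xs. f w) = f x * (\<Prod>w\<leftarrow>remove1 x xs. f w :: 'a::comm_monoid_mult)"
  by (induction xs) (auto simp: mult.left_commute)

lemma norm_prod_list: "norm (\<Prod>w\<leftarrow>ws. f w) = (\<Prod>w\<leftarrow>ws. norm (f w :: 'k::real_normed_field))"
  by (induction ws) (auto simp: norm_mult)

lemma power_length_le_prod_list:
  assumes "\<And>w. m \<le> g w" "0 \<le> m"
  shows "m ^ length ws \<le> (\<Prod>w\<leftarrow>ws. g w :: real)"
proof (induction ws)
  case (Cons v vs)
  then show ?case
    using assms by (simp add: mult_mono order.trans[OF assms(2)])
qed simp

lemma member_times_power_le_prod_list: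
  assumes "\<eta> \<in> set ws" "\<And>w. m \<le> g w" "0 \<le> m"
  shows "g \<eta> * m ^ (length ws - 1) \<le> (\<Prod>w\<leftarrow>ws. g w :: real)"
proof -
  have "m ^ (length ws - 1) \<le> (\<Prod>w\<leftarrow>remove1 \<eta> ws. g w)"
    using power_length_le_prod_list[of m g "remove1 \<eta> ws"] assms by (simp add: length_remove1)
  then have "g \<eta> * m ^ (length ws - 1) \<le> g \<eta> * (\<Prod>w\<leftarrow>remove1 \<eta> ws. g w)"
    using assms order.trans by (intro mult_left_mono) blast+
  with assms(1) show ?thesis
    by (simp add: prod_list_map_remove1)
qed

text \<open>The heart of the elementary Gelfand--Mazur argument: the product of \<open>quad a\<close> over the
  \<open>2 ^ r\<close> points \<open>z\<^sub>0 + w\<close>, \<open>w ^ 2 ^ r = \<eta> ^ 2 ^ r\<close>, is \<open>quad a z\<^sub>0 ^ 2 ^ r\<close> up to terms of size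
  \<open>O(\<bar>\<eta>\<bar> ^ 2 ^ r)\<close>.\<close>
lemma norm_prod_quad_around:
  fixes a :: "'k::real_normed_field"
  assumes ws: "\<forall>(h :: complex \<Rightarrow> 'k complexification) y. complex_hom h \<longrightarrow>
      (\<Prod>w\<leftarrow>ws. y - h w) = y ^ N - h \<eta> ^ N"
  shows "norm (\<Prod>w\<leftarrow>ws. quad a (z\<^sub>0 + w))
    \<le> norm (quad a z\<^sub>0) ^ N + 2 * ((norm a + 2 * cmod z\<^sub>0) * (2 * cmod \<eta>)) ^ N + ((cmod \<eta>)\<^sup>2) ^ N"
proof -
  define B where "B = norm a + 2 * cmod z\<^sub>0"
  define y :: "'k complexification" where "y = Cplx a 0 - cplx_of_complex z\<^sub>0"
  define y' :: "'k complexification" where "y' = Cplx a 0 - cplx_of_complex (cnj z\<^sub>0)"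
  define c :: "'k complexification" where "c = cplx_of_complex \<eta>"
  define c' :: "'k complexification" where "c' = cplx_of_complex (cnj \<eta>)"
  define T where "T = y ^ N * c' ^ N + y' ^ N * c ^ N"
  have "Cplx (quad a (z\<^sub>0 + w)) 0 = (y - cplx_of_complex w) * (y' - cplx_of_complex (cnj w))" for w
    using quad_factorization[of a "z\<^sub>0 + w"] by (simp add: y_def y'_def cplx_of_complex_add algebra_simps)
  then have "Cplx (\<Prod>w\<leftarrow>ws. quad a (z\<^sub>0 + w)) 0
      = (\<Prod>w\<leftarrow>ws. (y - cplx_of_complex w) * (y' - cplx_of_complex (cnj w)))"
    by (simp flip: prod_list_Cplx_real)
  also have "\<dots> = (\<Prod>w\<leftarrow>ws. y - cplx_of_complex w) * (\<Prod>w\<leftarrow>ws. y' - cplx_of_complex (cnj w))"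
    by (rule prod_list_map_mult)
  also have "\<dots> = (y ^ N - c ^ N) * (y' ^ N - c' ^ N)"
  proof -
    have "(\<Prod>w\<leftarrow>ws. y - cplx_of_complex w) = y ^ N - c ^ N"
      using ws[rule_format, OF complex_hom_cplx_of_complex] by (simp add: c_def)
    moreover have "(\<Prod>w\<leftarrow>ws. y' - cplx_of_complex (cnj w)) = y' ^ N - c' ^ N"
      using ws[rule_format, OF complex_hom_cplx_of_complex_cnj] by (simp add: c'_def)
    ultimately show ?thesis by simp
  qed
  also have "\<dots> = (y * y') ^ N - T + (c * c') ^ N"
    by (simp add: T_def power_mult_distrib algebra_simps)
  also have "y * y' = Cplx (quad a z\<^sub>0) 0"
    by (simp add: y_def y'_def quad_factorization)
  also have "c * c' = Cplx (of_real ((cmod \<eta>)\<^sup>2)) 0"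
    using cmod_power2[of \<eta>] by (intro complexification.expand conjI)
      (simp_all add: c_def c'_def cplx_of_complex_def power2_eq_square algebra_simps
        flip: of_real_mult of_real_add)
  finally have "Cplx (\<Prod>w\<leftarrow>ws. quad a (z\<^sub>0 + w)) 0
      = Cplx (quad a z\<^sub>0) 0 ^ N - T + Cplx (of_real ((cmod \<eta>)\<^sup>2)) 0 ^ N" .
  from arg_cong[OF this, of cre]
  have prod_eq: "(\<Prod>w\<leftarrow>ws. quad a (z\<^sub>0 + w)) = quad a z\<^sub>0 ^ N - cre T + of_real ((cmod \<eta>)\<^sup>2) ^ N"
    by (simp add: Cplx_real_power)
  have factors: "cnorm y \<le> B" "cnorm y' \<le> B" "cnorm c \<le> 2 * cmod \<eta>" "cnorm c' \<le> 2 * cmod \<eta>"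
    using norm_triangle_ineq4[of a "of_real (Re z\<^sub>0)"] abs_Re_le_cmod[of z\<^sub>0] abs_Im_le_cmod[of z\<^sub>0]
      cnorm_cplx_of_complex[of \<eta>] cnorm_cplx_of_complex[of "cnj \<eta>"]
    by (auto simp: y_def y'_def c_def c'_def cplx_of_complex_def cnorm_def B_def)
  have "norm (cre T) \<le> 2 * (B * (2 * cmod \<eta>)) ^ N"
    using cnorm_power_mult_le[OF factors(1,4), of N] cnorm_power_mult_le[OF factors(2,3), of N] norm_cre_le_cnorm[of T]
      cnorm_add[of "y ^ N * c' ^ N" "y' ^ N * c ^ N"] unfolding T_def by linarith
  have "norm (X - Y + Z) \<le> norm X + norm Y + norm Z" for X Y Z :: 'k
    using norm_triangle_ineq[of "X - Y" Z] norm_triangle_ineq4[of X Y] by linarith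
  from this[of "quad a z\<^sub>0 ^ N" "cre T" "of_real ((cmod \<eta>)\<^sup>2) ^ N"] show ?thesis
    using \<open>norm (cre T) \<le> 2 * (B * (2 * cmod \<eta>)) ^ N\<close> unfolding prod_eq B_def by (simp add: norm_power)
qed

lemma norm_quad_near_minimum:
  fixes a :: "'k::real_normed_field"
  assumes min: "\<And>z. m \<le> norm (quad a z)" and z\<^sub>0: "norm (quad a z\<^sub>0) = m"
  shows "norm (quad a (z\<^sub>0 + \<eta>)) * m ^ (2 ^ r - 1)
     \<le> m ^ 2 ^ r + 2 * ((norm a + 2 * cmod z\<^sub>0) * (2 * cmod \<eta>)) ^ 2 ^ r + ((cmod \<eta>)\<^sup>2) ^ 2 ^ r"
proof -
  obtain ws where ws: "length ws = 2 ^ r" "\<eta> \<in> set ws"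
    "\<forall>(h :: complex \<Rightarrow> 'k complexification) y. complex_hom h \<longrightarrow>
       (\<Prod>w\<leftarrow>ws. y - h w) = y ^ 2 ^ r - h \<eta> ^ 2 ^ r"
    using power_diff_power_factorization by blast
  have "m \<ge> 0"
    using z\<^sub>0 by auto
  then have "norm (quad a (z\<^sub>0 + \<eta>)) * m ^ (2 ^ r - 1) \<le> (\<Prod>w\<leftarrow>ws. norm (quad a (z\<^sub>0 + w)))"
    using member_times_power_le_prod_list[of \<eta> ws m "\<lambda>w. norm (quad a (z\<^sub>0 + w))"] ws min
    by simp
  also have "\<dots> \<le> m ^ 2 ^ r + 2 * ((norm a + 2 * cmod z\<^sub>0) * (2 * cmod \<eta>)) ^ 2 ^ r + ((cmod \<eta>)\<^sup>2) ^ 2 ^ r"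
    using norm_prod_quad_around[OF ws(3), of a z\<^sub>0] z\<^sub>0 by (simp add: norm_prod_list)
  finally show ?thesis .
qed

lemma le_of_power_bounds:
  fixes \<alpha> \<beta> m F :: real
  assumes "0 \<le> \<alpha>" "\<alpha> < 1" "0 \<le> \<beta>" "\<beta> < 1" "0 < m"
    and bound: "\<And>r. F * m ^ (2 ^ r - 1) \<le> m ^ 2 ^ r + 2 * (m * \<alpha>) ^ 2 ^ r + (m * \<beta>) ^ 2 ^ r"
  shows "F \<le> m"
proof (rule ccontr)
  assume "\<not> F \<le> m"
  define d where "d = (F - m) / m"
  have d: "d > 0"
    using \<open>\<not> F \<le> m\<close> assms by (simp add: d_def)
  have "(\<lambda>k. \<alpha> ^ k) \<longlonglongrightarrow> 0" "(\<lambda>k. \<beta> ^ k) \<longlonglongrightarrow> 0"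
    using assms by (auto intro!: LIMSEQ_power_zero)
  then have "eventually (\<lambda>k. \<alpha> ^ k < d / 4 \<and> \<beta> ^ k < d / 4) sequentially"
    using d by (auto intro: eventually_conj dest!: order_tendstoD(2)[where a = "d/4"])
  then obtain k where k: "\<alpha> ^ k < d / 4" "\<beta> ^ k < d / 4"
    by (auto simp: eventually_sequentially)
  define N :: nat where "N = 2 ^ k"
  have "\<alpha> ^ N \<le> \<alpha> ^ k" "\<beta> ^ N \<le> \<beta> ^ k" "N \<ge> 1"
    using assms less_exp[of k] by (auto simp: N_def intro!: power_decreasing)
  then have small: "2 * \<alpha> ^ N + \<beta> ^ N < d"
    using k d by linarith
  have "F * m ^ (N - 1) \<le> m ^ N * (1 + 2 * \<alpha> ^ N + \<beta> ^ N)"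
    using bound[of k] by (simp add: N_def power_mult_distrib algebra_simps)
  also have "\<dots> < m ^ N * (1 + d)"
    using small assms by (intro mult_strict_left_mono) auto
  also have "\<dots> = F * m ^ (N - 1)"
    using assms \<open>N \<ge> 1\<close> by (cases N) (simp_all add: d_def field_simps)
  finally show False by simp
qed

lemma norm_quad_at_0_less:
  fixes a :: "'k::real_normed_field"
  assumes "3 * norm a + 1 \<le> cmod z"
  shows "norm (quad a 0) < norm (quad a z)"
proof -
  have "norm (quad a 0) = (norm a)\<^sup>2"
    by (simp add: quad_def norm_mult power2_eq_square)
  moreover have "(norm a)\<^sup>2 < (cmod z)\<^sup>2 - 2 * cmod z * norm a - (norm a)\<^sup>2"
  proof -
    have "0 \<le> norm a" "2 * norm a \<le> cmod z"
      using assms norm_ge_zero[of a] by linarith+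
    then have "(norm a + 1) * (3 * norm a + 1) \<le> (cmod z - 2 * norm a) * cmod z"
      using assms by (intro mult_mono) auto
    moreover have "(norm a + 1) * (3 * norm a + 1) = 3 * (norm a)\<^sup>2 + 4 * norm a + 1"
      "(cmod z - 2 * norm a) * cmod z = (cmod z)\<^sup>2 - 2 * cmod z * norm a"
      by (simp_all add: power2_eq_square algebra_simps)
    ultimately show ?thesis
      using \<open>0 \<le> norm a\<close> zero_le_power2[of "norm a"] by linarith
  qed
  ultimately show ?thesis
    using norm_quad_lower_bound[of z a] by linarith
qed

lemma norm_quad_attains_min: "\<exists>z\<^sub>0. \<forall>z. norm (quad a z\<^sub>0) \<le> norm (quad a z)"
proof -
  define R where "R = 3 * norm a + 1"
  have "0 \<le> R"
    unfolding R_def using norm_ge_zero[of a] by linarith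
  then have "cball 0 R \<noteq> {}"
    by simp
  from continuous_attains_inf[OF compact_cball this continuous_on_subset[OF continuous_on_norm_quad]]
  obtain z\<^sub>0 where z\<^sub>0: "z\<^sub>0 \<in> cball 0 R" "\<And>z. z \<in> cball 0 R \<Longrightarrow> norm (quad a z\<^sub>0) \<le> norm (quad a z)"
    by blast
  have "norm (quad a z\<^sub>0) \<le> norm (quad a z)" for z
  proof (cases "z \<in> cball 0 R")
    case False
    then have "norm (quad a 0) < norm (quad a z)"
      by (intro norm_quad_at_0_less) (simp add: R_def)
    moreover have "norm (quad a z\<^sub>0) \<le> norm (quad a 0)"
      using z\<^sub>0(2) by (simp add: R_def)
    ultimately show ?thesis by simp
  qed (use z\<^sub>0 in auto)
  then show ?thesis by blast
qed

lemma open_minimum_level_norm_quad: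
  fixes a :: "'k::real_normed_field"
  assumes min: "\<And>z. m \<le> norm (quad a z)" and "0 < m"
  shows "open {z. norm (quad a z) = m}"
proof (rule openI)
  fix z assume "z \<in> {z. norm (quad a z) = m}"
  then have z: "norm (quad a z) = m" by simp
  define B where "B = norm a + 2 * cmod z"
  define e where "e = min (m / (2 * B + 1)) (sqrt m)"
  have "B \<ge> 0"
    by (simp add: B_def)
  then have "e > 0"
    using \<open>0 < m\<close> by (simp add: e_def)
  have "norm (quad a w) = m" if "w \<in> ball z e" for w
  proof -
    define \<eta> where "\<eta> = w - z"
    have "cmod \<eta> < e"
      using that by (simp add: \<eta>_def dist_norm norm_minus_commute)
    define \<alpha> where "\<alpha> = B * (2 * cmod \<eta>) / m"
    define \<beta> where "\<beta> = (cmod \<eta>)\<^sup>2 / m"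
    have "cmod \<eta> * (2 * B + 1) < m"
      using \<open>cmod \<eta> < e\<close> \<open>0 < m\<close> \<open>B \<ge> 0\<close> by (simp add: e_def field_simps)
    moreover have "B * (2 * cmod \<eta>) \<le> cmod \<eta> * (2 * B + 1)"
      by (simp add: algebra_simps)
    ultimately have "\<alpha> < 1"
      using \<open>0 < m\<close> by (simp add: \<alpha>_def)
    have "(cmod \<eta>)\<^sup>2 < (sqrt m)\<^sup>2"
      using \<open>cmod \<eta> < e\<close> by (intro power_strict_mono) (auto simp: e_def)
    then have "\<beta> < 1"
      using \<open>0 < m\<close> by (simp add: \<beta>_def)
    have "norm (quad a (z + \<eta>)) \<le> m"
    proof (rule le_of_power_bounds)
      show "0 \<le> \<alpha>" "0 \<le> \<beta>"
        using \<open>0 < m\<close> \<open>B \<ge> 0\<close> by (auto simp: \<alpha>_def \<beta>_def)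
      show "norm (quad a (z + \<eta>)) * m ^ (2 ^ r - 1) \<le> m ^ 2 ^ r + 2 * (m * \<alpha>) ^ 2 ^ r + (m * \<beta>) ^ 2 ^ r"
        for r
        using norm_quad_near_minimum[OF min z, of \<eta> r] \<open>0 < m\<close> by (simp add: \<alpha>_def \<beta>_def B_def)
    qed (use \<open>\<alpha> < 1\<close> \<open>\<beta> < 1\<close> \<open>0 < m\<close> in auto)
    then show ?thesis
      using min[of "z + \<eta>"] by (simp add: \<eta>_def)
  qed
  then show "\<exists>e>0. ball z e \<subseteq> {z. norm (quad a z) = m}"
    using \<open>e > 0\<close> by blast
qed

theorem quad_has_zero: "\<exists>z. quad (a::'k::real_normed_field) z = 0"
proof (rule ccontr)
  assume no_zero: "\<nexists>z. quad a z = 0"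
  obtain z\<^sub>0 where min: "\<And>z. norm (quad a z\<^sub>0) \<le> norm (quad a z)"
    using norm_quad_attains_min by blast
  define m where "m = norm (quad a z\<^sub>0)"
  have "0 < m"
    using no_zero by (auto simp: m_def)
  define S where "S = {z. norm (quad a z) = m}"
  have "closed S"
    unfolding S_def by (intro closed_Collect_eq continuous_on_norm_quad continuous_on_const)
  moreover have "open S"
    unfolding S_def using min \<open>0 < m\<close> by (intro open_minimum_level_norm_quad) (auto simp: m_def)
  moreover have "z\<^sub>0 \<in> S"
    by (simp add: S_def m_def)
  ultimately have "S = UNIV"
    using clopen by blast
  define t where "t = 3 * norm a + 1"
  have "0 \<le> t"
    unfolding t_def using norm_ge_zero[of a] by linarith
  then have "norm (quad a 0) < norm (quad a (complex_of_real t))"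
    by (intro norm_quad_at_0_less) (simp add: t_def[symmetric])
  moreover have "complex_of_real t \<in> S" "m \<le> norm (quad a 0)"
    using \<open>S = UNIV\<close> min by (auto simp: m_def)
  ultimately show False
    by (simp add: S_def)
qed

definition of_complex_via :: "'k::real_normed_field \<Rightarrow> complex \<Rightarrow> 'k" where
  "of_complex_via J w = of_real (Re w) + of_real (Im w) * J"

lemma of_complex_via_add: "of_complex_via J (z + w) = of_complex_via J z + of_complex_via J w"
  by (simp add: of_complex_via_def algebra_simps)

lemma of_complex_via_of_real [simp]: "of_complex_via J (complex_of_real r) = of_real r"
  by (simp add: of_complex_via_def)

lemma of_complex_via_1 [simp]: "of_complex_via J 1 = 1"
  by (simp add: of_complex_via_def)

lemma of_complex_via_mult:
  assumes "J * J = -1"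
  shows "of_complex_via J (z * w) = of_complex_via J z * of_complex_via J w"
proof -
  have "of_complex_via J z * of_complex_via J w = of_real (Re z * Re w) +
      of_real (Re z * Im w + Im z * Re w) * J + of_real (Im z * Im w) * (J * J)"
    by (simp add: of_complex_via_def algebra_simps)
  then show ?thesis
    using assms by (simp add: of_complex_via_def algebra_simps)
qed

lemma of_complex_via_power: "J * J = -1 \<Longrightarrow> of_complex_via J (z ^ k) = of_complex_via J z ^ k"
  by (induction k) (simp_all add: of_complex_via_mult)

lemma norm_of_complex_via_le:
  assumes "J * J = -1"
  shows "norm (of_complex_via J w) \<le> 2 * cmod w"
proof -
  have "(norm J)\<^sup>2 = 1"
    using arg_cong[OF assms, of norm] by (simp add: norm_mult power2_eq_square)
  then have "norm J = 1"
    by (simp add: power2_eq_1_iff) (smt (verit) norm_ge_zero)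
  then have "norm (of_complex_via J w) \<le> \<bar>Re w\<bar> + \<bar>Im w\<bar>"
    using norm_triangle_ineq[of "of_real (Re w) :: 'a" "of_real (Im w) * J"]
    by (simp add: of_complex_via_def norm_mult)
  then show ?thesis
    using abs_Re_le_cmod[of w] abs_Im_le_cmod[of w] by simp
qed

text \<open>Powers of a unit \<open>u\<close> stay bounded, which forces \<open>norm (of_complex_via J u) \<le> 1\<close>;
  applying this to \<open>u\<close> and \<open>inverse u\<close> gives equality.\<close>
lemma norm_of_complex_via:
  assumes J: "J * J = -1"
  shows "norm (of_complex_via J z) = cmod z"
proof -
  have le_1: "norm (of_complex_via J u) \<le> 1" if "cmod u = 1" for u
  proof (rule ccontr)
    assume "\<not> ?thesis"
    then obtain k where "2 < norm (of_complex_via J u) ^ k"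
      using real_arch_pow[of "norm (of_complex_via J u)" 2] by force
    moreover have "norm (of_complex_via J u) ^ k \<le> 2"
      using norm_of_complex_via_le[OF J, of "u ^ k"] that
      by (simp add: of_complex_via_power[OF J] norm_power)
    ultimately show False by simp
  qed
  have unit: "norm (of_complex_via J u) = 1" if "cmod u = 1" for u
  proof -
    have "u \<noteq> 0"
      using that by auto
    then have "of_complex_via J u * of_complex_via J (inverse u) = 1"
      by (simp flip: of_complex_via_mult[OF J])
    then have "norm (of_complex_via J u) * norm (of_complex_via J (inverse u)) = 1"
      by (metis norm_mult norm_one)
    moreover have "norm (of_complex_via J (inverse u)) \<le> 1" "norm (of_complex_via J u) \<le> 1"
      using le_1 that by (simp_all add: norm_inverse)
    ultimately show ?thesis
      by (metis mult_le_one mult_right_le_one_le norm_ge_zero order_antisym_conv)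
  qed
  show ?thesis
  proof (cases "z = 0")
    case False
    then have "cmod (z / complex_of_real (cmod z)) = 1"
      by (simp add: norm_divide)
    moreover have "z = complex_of_real (cmod z) * (z / complex_of_real (cmod z))"
      using False by simp
    then have "of_complex_via J z = of_real (cmod z) * of_complex_via J (z / complex_of_real (cmod z))"
      by (metis of_complex_via_mult[OF J] of_complex_via_of_real)
    ultimately show ?thesis
      using unit by (simp add: norm_mult)
  qed (simp add: of_complex_via_def)
qed

lemma quad_zero_iff:
  "quad b u = 0 \<longleftrightarrow> (b - of_real (Re u)) * (b - of_real (Re u)) = - (of_real (Im u) * of_real (Im u))"
  by (simp add: quad_eq eq_neg_iff_add_eq_0)

text \<open>Gelfand--Mazur: a zero of \<open>quad a\<close> for non-real \<open>a\<close> yields \<open>J\<close>, and every \<open>b\<close> is \<open>x + y J\<close>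
  because \<open>quad b\<close> has a zero as well.\<close>
theorem real_normed_field_complex_cases:
  fixes a :: "'k::real_normed_field"
  assumes "a \<notin> range of_real"
  obtains J :: 'k where "J * J = -1" "surj (of_complex_via J)"
proof -
  obtain z where z: "quad a z = 0"
    using quad_has_zero by blast
  have "Im z \<noteq> 0"
  proof
    assume "Im z = 0"
    then have "a = of_real (Re z)"
      using z by (simp add: quad_zero_iff)
    then show False
      using assms by auto
  qed
  define J where "J = (a - of_real (Re z)) / of_real (Im z)"
  have J: "J * J = -1"
    using z \<open>Im z \<noteq> 0\<close> by (simp add: quad_zero_iff J_def field_simps)
  have "b \<in> range (of_complex_via J)" for b :: 'k
  proof -
    obtain u where u: "quad b u = 0"
      using quad_has_zero by blast
    show ?thesis
    proof (cases "Im u = 0")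
      case True
      then have "b = of_complex_via J (complex_of_real (Re u))"
        using u by (simp add: quad_zero_iff)
      then show ?thesis by blast
    next
      case False
      define s where "s = (b - of_real (Re u)) / of_real (Im u)"
      have "s * s = -1"
        using u False by (simp add: quad_zero_iff s_def field_simps)
      then have "(s - J) * (s + J) = 0"
        using J by (simp add: algebra_simps)
      then have "s = J \<or> s = - J"
        by (auto simp: eq_neg_iff_add_eq_0)
      then have "b = of_complex_via J (Complex (Re u) (Im u)) \<or> b = of_complex_via J (Complex (Re u) (- Im u))"
        using False by (auto simp: of_complex_via_def s_def field_simps)
      then show ?thesis by blast
    qed
  qed
  then show ?thesis
    using that J by blast
qed

section \<open>The Hahn--Banach theorem\<close>

text \<open>Graphs of real-linear functionals on subspaces, dominated by the norm and norming
  at \<open>x\<close>; Zorn's lemma yields a maximal one, which is total by the one-step extension.\<close>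
definition norming_graph :: "'e::real_normed_vector \<Rightarrow> ('e \<times> real) set \<Rightarrow> bool" where
  "norming_graph x G \<longleftrightarrow>
     (\<forall>(u, a)\<in>G. \<forall>(v, b)\<in>G. (u + v, a + b) \<in> G) \<and>
     (\<forall>(u, a)\<in>G. \<forall>r. (r *\<^sub>R u, r * a) \<in> G) \<and>
     (\<forall>(u, a)\<in>G. \<forall>(v, b)\<in>G. u = v \<longrightarrow> a = b) \<and>
     (\<forall>(u, a)\<in>G. a \<le> norm u) \<and>
     (x, norm x) \<in> G"

lemma norming_graphD:
  assumes "norming_graph x G"
  shows norming_graph_add: "(u, a) \<in> G \<Longrightarrow> (v, b) \<in> G \<Longrightarrow> (u + v, a + b) \<in> G"
    and norming_graph_scaleR: "(u, a) \<in> G \<Longrightarrow> (r *\<^sub>R u, r * a) \<in> G"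
    and norming_graph_unique: "(u, a) \<in> G \<Longrightarrow> (u, b) \<in> G \<Longrightarrow> a = b"
    and norming_graph_le_norm: "(u, a) \<in> G \<Longrightarrow> a \<le> norm u"
    and norming_graph_point: "(x, norm x) \<in> G"
  using assms unfolding norming_graph_def by fast+

lemma norming_graph_The:
  assumes "norming_graph x G" "(u, a) \<in> G"
  shows "(THE a. (u, a) \<in> G) = a"
  using assms norming_graph_unique[OF assms(1)] by blast

lemma norming_graphI:
  assumes "\<And>p q. p \<in> G \<Longrightarrow> q \<in> G \<Longrightarrow> (fst p + fst q, snd p + snd q) \<in> G"
    and "\<And>p r. p \<in> G \<Longrightarrow> (r *\<^sub>R fst p, r * snd p) \<in> G"
    and "\<And>p q. p \<in> G \<Longrightarrow> q \<in> G \<Longrightarrow> fst p = fst q \<Longrightarrow> snd p = snd q"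
    and "\<And>p. p \<in> G \<Longrightarrow> snd p \<le> norm (fst p)"
    and "(x, norm x) \<in> G"
  shows "norming_graph x G"
  unfolding norming_graph_def case_prod_beta using assms by blast

lemma norming_graph_line: "norming_graph x {(r *\<^sub>R x, r * norm x) | r. True}"
proof -
  have "r * norm x = s * norm x" if "r *\<^sub>R x = s *\<^sub>R x" for r s
    using that by (cases "x = 0") auto
  moreover have "r * norm x \<le> \<bar>r\<bar> * norm x" for r
    by (simp add: mult_right_mono)
  ultimately show ?thesis
    unfolding norming_graph_def
    by (auto simp: algebra_simps intro: exI[of _ 1] exI[of _ "r + s" for r s] exI[of _ "r * s" for r s])
qed

lemma norming_graph_Union_chain:
  assumes "C \<in> chains {G. norming_graph x G}" "C \<noteq> {}"
  shows "norming_graph x (\<Union>C)"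
proof -
  have graphs: "\<And>G. G \<in> C \<Longrightarrow> norming_graph x G"
    using assms by (auto simp: chains_def)
  have common: "\<exists>G\<in>C. p \<in> G \<and> q \<in> G" if "p \<in> \<Union>C" "q \<in> \<Union>C" for p q
    using that assms(1) unfolding chains_def chain_subset_def by blast
  show ?thesis
  proof (rule norming_graphI)
    fix p q
    assume "p \<in> \<Union>C" "q \<in> \<Union>C"
    then obtain G where "G \<in> C" "p \<in> G" "q \<in> G"
      using common by blast
    moreover have "(fst p, snd p) \<in> G" "(fst q, snd q) \<in> G"
      using \<open>p \<in> G\<close> \<open>q \<in> G\<close> by simp_all
    ultimately show "(fst p + fst q, snd p + snd q) \<in> \<Union>C" "fst p = fst q \<Longrightarrow> snd p = snd q"
      using norming_graph_add[OF graphs] norming_graph_unique[OF graphs] by (blast, metis)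
  next
    fix p r
    assume "p \<in> \<Union>C"
    then obtain G where "G \<in> C" "p \<in> G"
      by blast
    then show "(r *\<^sub>R fst p, r * snd p) \<in> \<Union>C" "snd p \<le> norm (fst p)"
      using graphs[of G] norming_graph_scaleR[of x G "fst p" "snd p" r]
        norming_graph_le_norm[of x G "fst p" "snd p"] by auto
  next
    obtain G where "G \<in> C"
      using assms(2) by blast
    then show "(x, norm x) \<in> \<Union>C"
      using graphs norming_graph_point by blast
  qed
qed

lemma dominated_extension_bounds:
  fixes g :: "'e::real_normed_vector \<Rightarrow> real"
  assumes add: "\<And>u v. u \<in> M \<Longrightarrow> v \<in> M \<Longrightarrow> u + v \<in> M \<and> g (u + v) = g u + g v"
    and le: "\<And>u. u \<in> M \<Longrightarrow> g u \<le> norm u" and "0 \<in> M"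
  obtains c where "\<And>m. m \<in> M \<Longrightarrow> g m - norm (m - y) \<le> c" "\<And>m. m \<in> M \<Longrightarrow> c \<le> norm (m + y) - g m"
proof -
  have key: "g m - norm (m - y) \<le> norm (m' + y) - g m'" if "m \<in> M" "m' \<in> M" for m m'
  proof -
    have "g m + g m' \<le> norm (m + m')"
      using add le that by metis
    also have "\<dots> \<le> norm (m - y) + norm (m' + y)"
      using norm_triangle_ineq[of "m - y" "m' + y"] by simp
    finally show ?thesis by simp
  qed
  define c where "c = Sup {g m - norm (m - y) | m. m \<in> M}"
  have c_upper: "c \<le> norm (m' + y) - g m'" if "m' \<in> M" for m'
    unfolding c_def using key that \<open>0 \<in> M\<close> by (intro cSup_least) auto
  have c_lower: "g m - norm (m - y) \<le> c" if "m \<in> M" for m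
    unfolding c_def using key \<open>0 \<in> M\<close> that by (intro cSup_upper) (auto simp: bdd_above_def)
  show ?thesis
    using that c_lower c_upper by blast
qed

lemma dominated_extension_pos:
  fixes g :: "'e::real_normed_vector \<Rightarrow> real"
  assumes scale: "\<And>u r. u \<in> M \<Longrightarrow> r *\<^sub>R u \<in> M \<and> g (r *\<^sub>R u) = r * g u"
    and upper: "\<And>m. m \<in> M \<Longrightarrow> c \<le> norm (m + y) - g m" and "u \<in> M" "0 < t"
  shows "g u + t * c \<le> norm (u + t *\<^sub>R y)"
proof -
  have "t * c \<le> t * (norm ((1 / t) *\<^sub>R u + y) - g ((1 / t) *\<^sub>R u))"
    using upper[of "(1 / t) *\<^sub>R u"] scale \<open>u \<in> M\<close> \<open>0 < t\<close> by (intro mult_left_mono) auto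
  also have "\<dots> = norm (t *\<^sub>R ((1 / t) *\<^sub>R u + y)) - g u"
    using scale \<open>u \<in> M\<close> \<open>0 < t\<close> by (simp add: right_diff_distrib)
  finally show ?thesis
    using \<open>0 < t\<close> by (simp add: algebra_simps)
qed

text \<open>Negative multiples of \<open>y\<close> are handled by the positive case for \<open>-y\<close> and \<open>-c\<close>.\<close>
lemma dominated_extension_constant:
  fixes g :: "'e::real_normed_vector \<Rightarrow> real"
  assumes add: "\<And>u v. u \<in> M \<Longrightarrow> v \<in> M \<Longrightarrow> u + v \<in> M \<and> g (u + v) = g u + g v"
    and scale: "\<And>u r. u \<in> M \<Longrightarrow> r *\<^sub>R u \<in> M \<and> g (r *\<^sub>R u) = r * g u"
    and le: "\<And>u. u \<in> M \<Longrightarrow> g u \<le> norm u" and "0 \<in> M"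
  obtains c where "\<And>u t. u \<in> M \<Longrightarrow> g u + t * c \<le> norm (u + t *\<^sub>R y)"
proof -
  obtain c where c_lower: "\<And>m. m \<in> M \<Longrightarrow> g m - norm (m - y) \<le> c"
    and c_upper: "\<And>m. m \<in> M \<Longrightarrow> c \<le> norm (m + y) - g m"
    using dominated_extension_bounds[OF add le \<open>0 \<in> M\<close>] by blast
  have c_upper': "- c \<le> norm (m + - y) - g m" if "m \<in> M" for m
    using c_lower[OF that] by simp
  have "g u + t * c \<le> norm (u + t *\<^sub>R y)" if "u \<in> M" for u t
  proof -
    consider "t = 0" | "t > 0" | "t < 0"
      by linarith
    then show ?thesis
    proof cases
      case 1
      then show ?thesis
        using le that by simp
    next
      case 2
      then show ?thesis
        using dominated_extension_pos[OF scale c_upper that] by blast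
    next
      case 3
      then show ?thesis
        using dominated_extension_pos[OF scale c_upper' that, of "- t"] by simp
    qed
  qed
  then show ?thesis
    using that by blast
qed

lemma add_scaleR_eq_imp_eq:
  fixes y :: "'e::real_vector"
  assumes add: "\<And>u v. u \<in> M \<Longrightarrow> v \<in> M \<Longrightarrow> u + v \<in> M"
    and scale: "\<And>u r. u \<in> M \<Longrightarrow> r *\<^sub>R u \<in> M"
    and "y \<notin> M" "u \<in> M" "v \<in> M" "u + t *\<^sub>R y = v + s *\<^sub>R y"
  shows "u = v \<and> t = s"
proof (rule ccontr)
  assume "\<not> (u = v \<and> t = s)"
  with assms(6) have "t \<noteq> s"
    by auto
  have "(t - s) *\<^sub>R y = v + (-1) *\<^sub>R u"
    using assms(6) by (simp add: algebra_simps)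
  moreover have "y = (1 / (t - s)) *\<^sub>R ((t - s) *\<^sub>R y)"
    using \<open>t \<noteq> s\<close> by simp
  moreover have "(1 / (t - s)) *\<^sub>R (v + (-1) *\<^sub>R u) \<in> M"
    using add scale assms(4,5) by blast
  ultimately show False
    using \<open>y \<notin> M\<close> by simp
qed

lemma norming_graph_extension:
  fixes g :: "'e::real_normed_vector \<Rightarrow> real"
  assumes add: "\<And>u v. u \<in> M \<Longrightarrow> v \<in> M \<Longrightarrow> u + v \<in> M \<and> g (u + v) = g u + g v"
    and scale: "\<And>u r. u \<in> M \<Longrightarrow> r *\<^sub>R u \<in> M \<and> g (r *\<^sub>R u) = r * g u"
    and dom: "\<And>u t. u \<in> M \<Longrightarrow> g u + t * c \<le> norm (u + t *\<^sub>R y)"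
    and x: "x \<in> M" "g x = norm x" and "y \<notin> M"
  shows "norming_graph x {(u + t *\<^sub>R y, g u + t * c) | u t. u \<in> M}" (is "norming_graph x ?G")
proof (rule norming_graphI)
  fix p q assume "p \<in> ?G" "q \<in> ?G"
  then obtain u t v s where uv: "u \<in> M" "v \<in> M"
    and p: "p = (u + t *\<^sub>R y, g u + t * c)" and q: "q = (v + s *\<^sub>R y, g v + s * c)"
    by blast
  show "(fst p + fst q, snd p + snd q) \<in> ?G"
    unfolding p q using add[OF uv]
    by (intro CollectI exI[of _ "u + v"] exI[of _ "t + s"]) (auto simp: algebra_simps)
  show "fst p = fst q \<Longrightarrow> snd p = snd q"
    using add_scaleR_eq_imp_eq[of M y u v t s] add scale \<open>y \<notin> M\<close> uv by (simp add: p q)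
next
  fix p r assume "p \<in> ?G"
  then obtain u t where u: "u \<in> M" and p: "p = (u + t *\<^sub>R y, g u + t * c)"
    by blast
  show "(r *\<^sub>R fst p, r * snd p) \<in> ?G"
    unfolding p using scale[OF u]
    by (intro CollectI exI[of _ "r *\<^sub>R u"] exI[of _ "r * t"]) (auto simp: algebra_simps)
  show "snd p \<le> norm (fst p)"
    using dom[OF u] by (simp add: p)
next
  show "(x, norm x) \<in> ?G"
    using x by (intro CollectI exI[of _ x] exI[of _ 0]) simp
qed

lemma norming_graph_extend:
  fixes x :: "'e::real_normed_vector"
  assumes G: "norming_graph x G" and y: "y \<notin> fst ` G"
  shows "\<exists>G'. norming_graph x G' \<and> G \<subset> G'"
proof -
  define M where "M = fst ` G"
  define g where "g u = (THE a. (u, a) \<in> G)" for u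
  have g_eq: "g u = a" if "(u, a) \<in> G" for u a
    unfolding g_def using norming_graph_The[OF G that] .
  have in_G: "(u, g u) \<in> G" if "u \<in> M" for u
    using that g_eq by (force simp: M_def)
  have add: "u + v \<in> M \<and> g (u + v) = g u + g v" if "u \<in> M" "v \<in> M" for u v
    using norming_graph_add[OF G in_G[OF that(1)] in_G[OF that(2)]] g_eq by (force simp: M_def)
  have scale: "r *\<^sub>R u \<in> M \<and> g (r *\<^sub>R u) = r * g u" if "u \<in> M" for u r
    using norming_graph_scaleR[OF G in_G[OF that]] g_eq by (force simp: M_def)
  have le: "g u \<le> norm u" if "u \<in> M" for u
    using norming_graph_le_norm[OF G in_G[OF that]] .
  have x: "x \<in> M" "g x = norm x"
    using norming_graph_point[OF G] g_eq by (force simp: M_def)+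
  have "0 \<in> M"
    using scale[OF x(1), of 0] by simp
  obtain c where dom: "\<And>u t. u \<in> M \<Longrightarrow> g u + t * c \<le> norm (u + t *\<^sub>R y)"
    using dominated_extension_constant[OF add scale le \<open>0 \<in> M\<close>] by blast
  define G' where "G' = {(u + t *\<^sub>R y, g u + t * c) | u t. u \<in> M}"
  have "y \<notin> M"
    using y by (simp add: M_def)
  have "norming_graph x G'"
    using norming_graph_extension[OF add scale dom x \<open>y \<notin> M\<close>] unfolding G'_def .
  moreover have "G \<subseteq> G'"
    unfolding G'_def using in_G g_eq by (force simp: M_def)
  moreover have "(y, g 0 + c) \<in> G' - G"
    unfolding G'_def using \<open>0 \<in> M\<close> y by (force intro: exI[of _ 0] exI[of _ 1])
  ultimately show ?thesis
    by blast
qed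

theorem real_norming_functional:
  fixes x :: "'e::real_normed_vector"
  obtains f where "linear f" "\<And>u. \<bar>f u\<bar> \<le> norm u" "f x = norm x"
proof -
  have "\<forall>C\<in>chains {G. norming_graph x G}. \<exists>U\<in>{G. norming_graph x G}. \<forall>X\<in>C. X \<subseteq> U"
  proof
    fix C
    assume C: "C \<in> chains {G. norming_graph x G}"
    show "\<exists>U\<in>{G. norming_graph x G}. \<forall>X\<in>C. X \<subseteq> U"
    proof (cases "C = {}")
      case True
      then show ?thesis
        using norming_graph_line by blast
    next
      case False
      then show ?thesis
        using norming_graph_Union_chain[OF C False] by blast
    qed
  qed
  from Zorn_Lemma2[OF this] obtain G where G: "norming_graph x G"
    and max: "\<And>X. norming_graph x X \<Longrightarrow> G \<subseteq> X \<Longrightarrow> X = G"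
    by blast
  have total: "u \<in> fst ` G" for u
    using norming_graph_extend[OF G] max by blast
  define f where "f u = (THE a. (u, a) \<in> G)" for u
  have f_eq: "f u = a" if "(u, a) \<in> G" for u a
    unfolding f_def using norming_graph_The[OF G that] .
  have f: "(u, f u) \<in> G" for u
    using total[of u] f_eq by force
  have "linear f"
    by (rule linearI) (auto intro: f_eq norming_graph_add[OF G f f] norming_graph_scaleR[OF G f])
  moreover have "\<bar>f u\<bar> \<le> norm u" for u
    using norming_graph_le_norm[OF G f, of u] norming_graph_le_norm[OF G f, of "- u"]
      linear_neg[OF \<open>linear f\<close>, of u] by (simp add: abs_le_iff)
  moreover have "f x = norm x"
    using f_eq[OF norming_graph_point[OF G]] .
  ultimately show ?thesis
    using that by blast
qed

locale K_banach_space =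
  fixes smul :: "'k::{real_normed_field, banach} \<Rightarrow> 'e::banach \<Rightarrow> 'e"
  assumes scaling: "K_banach_scaling smul"
begin

lemma smul_smul: "smul a (smul b x) = smul (a * b) x"
  and smul_add: "smul a (x + y) = smul a x + smul a y"
  and add_smul: "smul (a + b) x = smul a x + smul b x"
  and smul_of_real: "smul (of_real r) x = r *\<^sub>R x"
  and norm_smul: "norm (smul a x) = norm a * norm x"
  using scaling unfolding K_banach_scaling_def by blast+

lemma smul_zero: "smul c 0 = 0"
  using smul_add[of c 0 0] by simp

lemma smul_minus_one: "smul (-1) x = - x"
  using smul_of_real[of "-1" x] by simp

lemma smul_scaleR_commute: "smul a (r *\<^sub>R x) = r *\<^sub>R smul a x"
  by (metis smul_of_real smul_smul mult.commute)

definition K_linear :: "('e \<Rightarrow> 'k) \<Rightarrow> bool" where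
  "K_linear \<phi> \<longleftrightarrow> (\<forall>a y. \<phi> (smul a y) = a * \<phi> y) \<and> (\<forall>y z. \<phi> (y + z) = \<phi> y + \<phi> z)"

lemma K_linear_bounded_linear:
  assumes "K_linear \<phi>" "\<And>y. norm (\<phi> y) \<le> norm y"
  shows "bounded_linear \<phi>"
proof
  show "\<phi> (x + y) = \<phi> x + \<phi> y" "\<phi> (r *\<^sub>R x) = r *\<^sub>R \<phi> x" for x y r
    using assms(1) smul_of_real[of r x] unfolding K_linear_def by (metis scaleR_conv_of_real)+
  show "\<exists>K. \<forall>x. norm (\<phi> x) \<le> norm x * K"
    using assms(2) by (intro exI[of _ 1]) simp
qed

text \<open>If \<open>J\<close> is a square root of \<open>-1\<close> in the scalars, the real functional \<open>f\<close> is the real part of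
  a complex-linear one, with imaginary part \<open>-f (J y)\<close>.\<close>
lemma complexified_functional:
  assumes J: "J * J = -1" and f: "linear f"
  defines "g \<equiv> \<lambda>y. Complex (f y) (- f (smul J y))"
  shows "g (smul (of_complex_via J w) y) = w * g y"
    and "g (y + z) = g y + g z"
proof -
  show add: "g (y + z) = g y + g z" for y z
    by (simp add: g_def smul_add linear_add[OF f] complex_eq_iff)
  have scale: "g (r *\<^sub>R y) = complex_of_real r * g y" for r y
    by (simp add: g_def smul_scaleR_commute linear_scale[OF f] complex_eq_iff)
  have "smul J (smul J y) = - y"
    using J by (simp add: smul_smul smul_minus_one)
  then have J_eq: "g (smul J y) = \<i> * g y"
    by (simp add: g_def linear_neg[OF f] complex_eq_iff)
  have "smul (of_complex_via J w) y = Re w *\<^sub>R y + Im w *\<^sub>R smul J y"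
    by (simp add: of_complex_via_def add_smul smul_of_real flip: smul_smul)
  then have "g (smul (of_complex_via J w) y) = complex_of_real (Re w) * g y + complex_of_real (Im w) * (\<i> * g y)"
    by (simp add: add scale J_eq)
  also have "\<dots> = w * g y"
    by (simp add: complex_eq_iff)
  finally show "g (smul (of_complex_via J w) y) = w * g y" .
qed

lemma norming_functional_complex:
  fixes J :: 'k
  assumes J: "J * J = -1" "surj (of_complex_via J)"
    and f: "linear f" "\<And>u. \<bar>f u\<bar> \<le> norm u" "f x = norm x"
  obtains \<phi> :: "'e \<Rightarrow> 'k" where "K_linear \<phi>" "\<And>y. norm (\<phi> y) \<le> norm y" "norm (\<phi> x) = norm x"
proof -
  define g where "g y = Complex (f y) (- f (smul J y))" for y
  note g = complexified_functional[OF J(1) f(1), folded g_def]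
  define \<phi> where "\<phi> y = of_complex_via J (g y)" for y
  have "K_linear \<phi>"
    unfolding K_linear_def
  proof safe
    fix a y
    have "a \<in> range (of_complex_via J)"
      using J(2) by simp
    then obtain w where "a = of_complex_via J w"
      by blast
    then show "\<phi> (smul a y) = a * \<phi> y"
      by (simp add: \<phi>_def g of_complex_via_mult[OF J(1)])
  qed (simp add: \<phi>_def g of_complex_via_add)
  have norm_\<phi>: "norm (\<phi> y) = cmod (g y)" for y
    by (simp add: \<phi>_def norm_of_complex_via[OF J(1)])
  have "norm (\<phi> y) \<le> norm y" for y
  proof (cases "g y = 0")
    case False
    define w where "w = cnj (g y) / complex_of_real (cmod (g y))"
    have "w * g y = complex_of_real (cmod (g y))"
      using False by (simp add: w_def complex_norm_square[symmetric] power2_eq_square field_simps)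
    then have "g (smul (of_complex_via J w) y) = complex_of_real (cmod (g y))"
      by (simp add: g)
    then have "cmod (g y) = f (smul (of_complex_via J w) y)"
      by (simp add: g_def complex_eq_iff)
    also have "\<dots> \<le> norm (smul (of_complex_via J w) y)"
      using f(2) by (metis abs_le_D1)
    also have "\<dots> = norm y"
      using False by (simp add: norm_smul norm_of_complex_via[OF J(1)] w_def norm_divide)
    finally show ?thesis
      by (simp add: norm_\<phi>)
  qed (simp add: norm_\<phi>)
  moreover have "norm x \<le> norm (\<phi> x)"
    using abs_Re_le_cmod[of "g x"] by (simp add: norm_\<phi> g_def f(3))
  ultimately show ?thesis
    using that \<open>K_linear \<phi>\<close> by (meson order_antisym)
qed

theorem norming_functional:
  obtains \<phi> :: "'e \<Rightarrow> 'k" where "K_linear \<phi>" "\<And>y. norm (\<phi> y) \<le> norm y" "norm (\<phi> x) = norm x"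
proof -
  obtain f where f: "linear f" "\<And>u. \<bar>f u\<bar> \<le> norm u" "f x = norm x"
    using real_norming_functional by blast
  show ?thesis
  proof (cases "range (of_real :: real \<Rightarrow> 'k) = UNIV")
    case True
    have "of_real (f (smul a y)) = a * of_real (f y)" for a y
    proof -
      have "a \<in> range of_real"
        using True by simp
      then obtain r where "a = of_real r"
        by blast
      then show ?thesis
        by (simp add: smul_of_real linear_scale[OF f(1)])
    qed
    then have "K_linear (\<lambda>y. of_real (f y) :: 'k)"
      by (simp add: K_linear_def linear_add[OF f(1)])
    then show ?thesis
      using that f by simp
  next
    case False
    then obtain a :: 'k where "a \<notin> range of_real"
      by blast
    then obtain J :: 'k where "J * J = -1" "surj (of_complex_via J)"
      by (rule real_normed_field_complex_cases)
    from norming_functional_complex[OF this f] show ?thesis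
      using that by blast
  qed
qed

end

section \<open>Polarization and homogeneous polynomials\<close>

text \<open>The polarization formula; for \<open>q x = A [x, \<dots>, x]\<close> it recovers the symmetrization of \<open>A\<close>
  (\<open>polarization_eq_symmetrization\<close>), whatever multilinear \<open>A\<close> was used to present \<open>q\<close>.\<close>
definition polarization :: "('e::real_normed_vector \<Rightarrow> 'k::real_normed_field) \<Rightarrow> 'e list \<Rightarrow> 'k" where
  "polarization q xs =
     (\<Sum>T\<in>Pow {..<length xs}. (-1) ^ (length xs - card T) * q (\<Sum>i\<in>T. xs ! i)) / fact (length xs)"

lemma polarization_add: "polarization (\<lambda>z. q z + q' z) xs = polarization q xs + polarization q' xs"
  by (simp add: polarization_def algebra_simps sum.distrib add_divide_distrib)

lemma polarization_mult: "polarization (\<lambda>z. c * q z) xs = c * polarization q xs"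
  by (simp add: polarization_def sum_distrib_left algebra_simps)

lemma polarization_diff: "polarization (\<lambda>z. q z - q' z) xs = polarization q xs - polarization q' xs"
  using polarization_add[of q "\<lambda>z. - q' z"] polarization_mult[of "-1" q'] by simp

lemma map_nth_list_update_distinct:
  assumes "distinct fs" "p < length fs" "fs ! p = i" "i < length xs"
  shows "map ((!) (xs[i := v])) fs = (map ((!) xs) fs)[p := v]"
proof (rule nth_equalityI)
  fix r
  assume "r < length (map ((!) (xs[i := v])) fs)"
  then have "r < length fs" "fs ! r = i \<longleftrightarrow> r = p"
    using assms nth_eq_iff_index_eq by auto
  then show "map ((!) (xs[i := v])) fs ! r = (map ((!) xs) fs)[p := v] ! r"
    using assms by (auto simp: nth_list_update)
qed simp

lemma permutations_of_lessThan: "permutations_of_set {..<n} = {fs. set fs = {..<n} \<and> length fs = n}"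
proof (intro set_eqI iffI)
  fix fs
  assume "fs \<in> permutations_of_set {..<n}"
  then have "set fs = {..<n}" "distinct fs"
    by (simp_all add: permutations_of_set_def)
  then show "fs \<in> {fs. set fs = {..<n} \<and> length fs = n}"
    using distinct_card[of fs] by simp
next
  fix fs
  assume "fs \<in> {fs. set fs = {..<n} \<and> length fs = n}"
  then show "fs \<in> permutations_of_set {..<n}"
    using card_distinct[of fs] by (simp add: permutations_of_set_def)
qed

lemma norm_polarization_le:
  fixes q :: "'e::real_normed_vector \<Rightarrow> 'k::real_normed_field"
  assumes q: "\<And>y. norm (q y) \<le> B * norm y ^ n" and "0 \<le> B" and "length zs = n"
  shows "norm (polarization q zs) \<le> 2 ^ n * B * (\<Sum>i<n. norm (zs ! i)) ^ n"
proof -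
  define R where "R = (\<Sum>i<n. norm (zs ! i))"
  define S where "S = (\<Sum>T\<in>Pow {..<n}. (-1) ^ (n - card T) * q (\<Sum>i\<in>T. zs ! i))"
  have term_bound: "norm ((-1) ^ (n - card T) * q (\<Sum>i\<in>T. zs ! i)) \<le> B * R ^ n"
    if "T \<in> Pow {..<n}" for T
  proof -
    have "norm (\<Sum>i\<in>T. zs ! i) \<le> R"
      unfolding R_def using that by (intro order.trans[OF norm_sum] sum_mono2) auto
    then have "B * norm (\<Sum>i\<in>T. zs ! i) ^ n \<le> B * R ^ n"
      using \<open>0 \<le> B\<close> by (intro mult_left_mono power_mono) auto
    then show ?thesis
      using q[of "\<Sum>i\<in>T. zs ! i"] by (simp add: norm_mult norm_power)
  qed
  have "norm S \<le> (\<Sum>T\<in>Pow {..<n}. B * R ^ n)"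
    unfolding S_def by (rule sum_norm_le) (rule term_bound)
  also have "\<dots> = 2 ^ n * B * R ^ n"
    by (simp add: card_Pow)
  finally have "norm S \<le> 2 ^ n * B * R ^ n" .
  moreover have "norm (polarization q zs) = norm S / fact n"
    by (simp add: polarization_def S_def assms(3) norm_divide)
  moreover have "norm S / fact n \<le> norm S / 1"
    by (intro divide_left_mono) auto
  ultimately show ?thesis
    by (simp add: R_def)
qed

context K_banach_space
begin

definition K_multilinear :: "nat \<Rightarrow> ('e list \<Rightarrow> 'k) \<Rightarrow> bool" where
  "K_multilinear n A \<longleftrightarrow>
     (\<forall>xs i a b. length xs = n \<longrightarrow> i < n \<longrightarrow> A (xs[i := a + b]) = A (xs[i := a]) + A (xs[i := b])) \<and>
     (\<forall>xs i a c. length xs = n \<longrightarrow> i < n \<longrightarrow> A (xs[i := smul c a]) = c * A (xs[i := a]))"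

lemma K_multilinearD:
  assumes "K_multilinear n A" "length xs = n" "i < n"
  shows K_multilinear_add: "A (xs[i := a + b]) = A (xs[i := a]) + A (xs[i := b])"
    and K_multilinear_smul: "A (xs[i := smul c a]) = c * A (xs[i := a])"
  using assms unfolding K_multilinear_def by blast+

lemma multilinear_map_Espace_Kspace: "multilinear_map (Espace smul) Kspace n A \<longleftrightarrow> K_multilinear n A"
  unfolding multilinear_map_def K_multilinear_def Espace_def Kspace_def by auto

lemma hom_poly_Espace_Kspace:
  "hom_poly (Espace smul) Kspace n q \<longleftrightarrow> (\<exists>A. K_multilinear n A \<and> (\<forall>x. q x = A (replicate n x)))"
  unfolding hom_poly_def multilinear_map_Espace_Kspace by (simp add: Espace_def)

lemma K_multilinear_zero:
  assumes "K_multilinear n A" "length xs = n" "i < n"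
  shows "A (xs[i := 0]) = 0"
  using K_multilinear_smul[OF assms, of 0 0] by (simp add: smul_zero)

lemma K_multilinear_sum:
  assumes "K_multilinear n A" "length xs = n" "i < n" "finite F"
  shows "A (xs[i := (\<Sum>j\<in>F. v j)]) = (\<Sum>j\<in>F. A (xs[i := v j]))"
  using assms(4)
  by (induction F rule: finite_induct) (simp_all add: K_multilinear_zero[OF assms(1-3)] K_multilinear_add[OF assms(1-3)])

lemma K_multilinear_replicate_smul:
  assumes A: "K_multilinear n A"
  shows "A (replicate n (smul c x)) = c ^ n * A (replicate n x)"
proof -
  have "A (replicate k (smul c x) @ replicate (n - k) x) = c ^ k * A (replicate n x)" if "k \<le> n" for k
    using that
  proof (induction k)
    case (Suc k)
    define L where "L = replicate k (smul c x) @ replicate (n - k) x"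
    obtain m where m: "n - k = Suc m" "n - Suc k = m"
      using Suc.prems by (metis Suc_diff_Suc Suc_le_lessD)
    have "replicate (Suc k) (smul c x) @ replicate (n - Suc k) x = L[k := smul c x]" "L[k := x] = L"
      unfolding L_def m by (simp_all add: list_update_append replicate_app_Cons_same)
    moreover have "length L = n"
      using Suc.prems by (simp add: L_def)
    ultimately show ?case
      using Suc K_multilinear_smul[OF A, of L k c x] by (simp add: L_def)
  qed simp
  from this[of n] show ?thesis by simp
qed

lemma K_multilinear_replicate_sum:
  assumes A: "K_multilinear n A" and T: "finite T"
  shows "A (replicate n (\<Sum>i\<in>T. x i)) = (\<Sum>fs | set fs \<subseteq> T \<and> length fs = n. A (map x fs))"
proof -
  define s where "s = (\<Sum>i\<in>T. x i)"
  have "A (ps @ replicate k s) = (\<Sum>fs | set fs \<subseteq> T \<and> length fs = k. A (ps @ map x fs))"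
    if "length ps + k = n" for ps k
    using that
  proof (induction k arbitrary: ps)
    case 0
    have "{fs. set fs \<subseteq> T \<and> length fs = 0} = {[]}"
      by auto
    then show ?case by simp
  next
    case (Suc k)
    have "A (ps @ replicate (Suc k) s) = A ((ps @ s # replicate k s)[length ps := s])"
      by simp
    also have "\<dots> = (\<Sum>i\<in>T. A ((ps @ [x i]) @ replicate k s))"
      unfolding s_def using Suc.prems by (subst K_multilinear_sum[OF A _ _ T]) simp_all
    also have "\<dots> = (\<Sum>i\<in>T. \<Sum>fs | set fs \<subseteq> T \<and> length fs = k. A (ps @ map x (i # fs)))"
    proof (intro sum.cong refl)
      fix i
      show "A ((ps @ [x i]) @ replicate k s) = (\<Sum>fs | set fs \<subseteq> T \<and> length fs = k. A (ps @ map x (i # fs)))"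
        using Suc.IH[of "ps @ [x i]"] Suc.prems by simp
    qed
    also have "\<dots> = (\<Sum>(fs, i)\<in>{fs. set fs \<subseteq> T \<and> length fs = k} \<times> T. A (ps @ map x (i # fs)))"
      by (subst sum.swap) (rule sum.cartesian_product)
    also have "\<dots> = (\<Sum>fs | set fs \<subseteq> T \<and> length fs = Suc k. A (ps @ map x fs))"
    proof (rule sym, rule sum.reindex_cong)
      show "inj_on (\<lambda>(fs, i). i # fs) ({fs. set fs \<subseteq> T \<and> length fs = k} \<times> T)"
        by (auto simp: inj_on_def)
    qed (simp_all add: lists_length_Suc_eq split: prod.splits)
    finally show ?case .
  qed
  from this[of "[]" n] show ?thesis
    by (simp add: s_def)
qed

lemma polarization_eq_symmetrization:
  assumes A: "K_multilinear n A" and q: "\<And>x. q x = A (replicate n x)" and len: "length xs = n"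
  shows "polarization q xs = (\<Sum>fs\<in>permutations_of_set {..<n}. A (map ((!) xs) fs)) / fact n"
proof -
  define onto where "onto T = (\<Sum>fs | set fs = T \<and> length fs = n. A (map ((!) xs) fs))" for T
  have "q (\<Sum>i\<in>T. xs ! i) = sum onto (Pow T)" if "finite T" for T
  proof -
    have "q (\<Sum>i\<in>T. xs ! i) = (\<Sum>fs | set fs \<subseteq> T \<and> length fs = n. A (map ((!) xs) fs))"
      using K_multilinear_replicate_sum[OF A that] q by simp
    also have "\<dots> = (\<Sum>S\<in>Pow T. \<Sum>fs | fs \<in> {fs. set fs \<subseteq> T \<and> length fs = n} \<and> set fs = S.
        A (map ((!) xs) fs))"
      by (rule sum.group[symmetric]) (use that finite_lists_length_eq in auto)
    also have "\<dots> = sum onto (Pow T)"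
      unfolding onto_def by (intro sum.cong refl arg_cong2[where f = sum]) auto
    finally show ?thesis .
  qed
  then have "onto {..<n} = (\<Sum>T\<in>Pow {..<n}. (-1) ^ (card {..<n} - card T) * q (\<Sum>i\<in>T. xs ! i))"
    by (intro inclusion_exclusion_mobius) auto
  then show ?thesis
    by (simp add: polarization_def len onto_def permutations_of_lessThan)
qed

lemma polarization_replicate:
  assumes A: "K_multilinear n A" and q: "\<And>x. q x = A (replicate n x)"
  shows "polarization q (replicate n x) = q x"
proof -
  have "map ((!) (replicate n x)) fs = replicate n x" if "fs \<in> permutations_of_set {..<n}" for fs
  proof -
    have "set fs = {..<n}" "length fs = n"
      using that by (simp_all add: permutations_of_lessThan)
    then have "map ((!) (replicate n x)) fs = map (\<lambda>_. x) fs"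
      by (intro map_cong) auto
    with \<open>length fs = n\<close> show ?thesis
      by (simp add: map_replicate_const)
  qed
  then show ?thesis
    by (simp add: polarization_eq_symmetrization[OF A q] q)
qed

lemma K_multilinear_polarization:
  assumes A: "K_multilinear n A" and q: "\<And>x. q x = A (replicate n x)"
  shows "K_multilinear n (polarization q)"
proof -
  have update: "length (map ((!) xs) fs) = n \<and> (\<exists>p<n. \<forall>v. map ((!) (xs[i := v])) fs = (map ((!) xs) fs)[p := v])"
    if perm: "fs \<in> permutations_of_set {..<n}" and len: "length xs = n" and i: "i < n" for fs xs i
  proof -
    have fs: "set fs = {..<n}" "distinct fs"
      using perm by (simp_all add: permutations_of_set_def)
    have "length fs = n"
      using distinct_card[OF fs(2)] fs(1) by simp
    have "i \<in> set fs"
      using fs(1) i by simp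
    then obtain p where "p < n" "fs ! p = i"
      using \<open>length fs = n\<close> by (auto simp: in_set_conv_nth)
    moreover have "map ((!) (xs[i := v])) fs = (map ((!) xs) fs)[p := v]" if "p < n" "fs ! p = i" for v
      by (rule map_nth_list_update_distinct[OF fs(2)]) (use that \<open>length fs = n\<close> len i in simp_all)
    ultimately show ?thesis
      using \<open>length fs = n\<close> by auto
  qed
  have "A (map ((!) (xs[i := a + b])) fs) = A (map ((!) (xs[i := a])) fs) + A (map ((!) (xs[i := b])) fs)"
    "A (map ((!) (xs[i := smul c a])) fs) = c * A (map ((!) (xs[i := a])) fs)"
    if "fs \<in> permutations_of_set {..<n}" "length xs = n" "i < n" for fs xs i a b c
    using update[OF that] K_multilinear_add[OF A] K_multilinear_smul[OF A] by auto
  then show ?thesis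
    unfolding K_multilinear_def
    by (simp add: polarization_eq_symmetrization[OF A q] sum.distrib sum_distrib_left add_divide_distrib)
qed

lemma hom_poly_polarization:
  assumes "hom_poly (Espace smul) Kspace n q"
  shows "K_multilinear n (polarization q)" "polarization q (replicate n x) = q x"
  using assms K_multilinear_polarization polarization_replicate unfolding hom_poly_Espace_Kspace by blast+

definition cont_hom_polys :: "nat \<Rightarrow> ('e \<Rightarrow> 'k) set" where
  "cont_hom_polys n = spc_carrier (Pspace (Espace smul) n)"

lemma spc_diff_Espace [simp]: "spc_diff (Espace smul) y x = y - x"
  by (simp add: spc_diff_def Espace_def smul_minus_one)

lemma spc_diff_Kspace [simp]: "spc_diff Kspace a b = a - b"
  by (simp add: spc_diff_def Kspace_def)

lemma Espace_simps [simp]: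
  "spc_carrier (Espace smul) = UNIV" "spc_norm (Espace smul) = norm"
  "spc_add (Espace smul) = (+)" "spc_smul (Espace smul) = smul"
  by (simp_all add: Espace_def)

lemma Kspace_simps [simp]: "spc_carrier Kspace = UNIV" "spc_norm Kspace = norm"
  by (simp_all add: Kspace_def)

lemma spc_continuous_Espace_Kspace: "spc_continuous (Espace smul) Kspace q \<longleftrightarrow> continuous_on UNIV q"
  by (simp add: spc_continuous_def continuous_on_iff dist_norm)

lemma mem_cont_hom_polys:
  "q \<in> cont_hom_polys n \<longleftrightarrow> hom_poly (Espace smul) Kspace n q \<and> continuous_on UNIV q"
  by (simp add: cont_hom_polys_def Pspace_def cont_hom_poly_def spc_continuous_Espace_Kspace)

lemma poly_norm_Espace: "poly_norm (Espace smul) q = Sup {norm (q x) | x. norm x \<le> 1}"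
  by (simp add: poly_norm_def Espace_def)

lemma hom_poly_homogeneous:
  assumes "hom_poly (Espace smul) Kspace n q"
  shows "q (smul c x) = c ^ n * q x" "q (r *\<^sub>R x) = of_real r ^ n * q x"
proof -
  show "q (smul c x) = c ^ n * q x" for c
    using K_multilinear_replicate_smul hom_poly_polarization[OF assms] by metis
  from this[of "of_real r"] show "q (r *\<^sub>R x) = of_real r ^ n * q x"
    by (simp add: smul_of_real)
qed

lemma cont_hom_polys_bounded_on_ball:
  assumes "q \<in> cont_hom_polys n"
  obtains K where "\<And>u. norm u \<le> 1 \<Longrightarrow> norm (q u) \<le> K"
proof -
  have hom: "hom_poly (Espace smul) Kspace n q" and "continuous_on UNIV q"
    using assms by (simp_all add: mem_cont_hom_polys)
  then obtain d where d: "d > 0" "\<And>y. norm y < d \<Longrightarrow> norm (q y - q 0) < 1"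
    unfolding continuous_on_iff by (metis UNIV_I dist_norm diff_zero zero_less_one)
  have "norm (q u) \<le> (2 / d) ^ n * (norm (q 0) + 1)" if "norm u \<le> 1" for u
  proof -
    have "norm ((d / 2) *\<^sub>R u) < d"
      using that d by simp
    then have "norm (q ((d / 2) *\<^sub>R u)) \<le> norm (q 0) + 1"
      using d(2) norm_triangle_ineq2[of "q ((d / 2) *\<^sub>R u)" "q 0"] by fastforce
    have "q u = of_real (2 / d) ^ n * q ((d / 2) *\<^sub>R u)"
      using d hom_poly_homogeneous(2)[OF hom, of "2 / d" "(d / 2) *\<^sub>R u"] by simp
    moreover have "norm (of_real (2 / d) :: 'k) = 2 / d"
      using d by (simp only: norm_of_real) simp
    ultimately have "norm (q u) = (2 / d) ^ n * norm (q ((d / 2) *\<^sub>R u))"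
      by (simp only: norm_mult norm_power)
    also have "\<dots> \<le> (2 / d) ^ n * (norm (q 0) + 1)"
      using \<open>norm (q ((d / 2) *\<^sub>R u)) \<le> norm (q 0) + 1\<close> d by (intro mult_left_mono) auto
    finally show ?thesis .
  qed
  then show ?thesis
    using that by blast
qed

lemma bdd_above_cont_hom_polys:
  assumes "q \<in> cont_hom_polys n"
  shows "bdd_above {norm (q x) | x. norm x \<le> 1}"
proof -
  obtain K where "\<And>u. norm u \<le> 1 \<Longrightarrow> norm (q u) \<le> K"
    using cont_hom_polys_bounded_on_ball[OF assms] by blast
  then show ?thesis
    by (intro bdd_aboveI[of _ K]) auto
qed

lemma norm_le_poly_norm:
  assumes "q \<in> cont_hom_polys n" "norm u \<le> 1"
  shows "norm (q u) \<le> poly_norm (Espace smul) q"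
proof -
  have "norm (q u) \<in> {norm (q x) | x. norm x \<le> 1}"
    using assms(2) by blast
  then show ?thesis
    unfolding poly_norm_Espace using bdd_above_cont_hom_polys[OF assms(1)] by (rule cSup_upper)
qed

lemma poly_norm_nonneg:
  assumes "q \<in> cont_hom_polys n"
  shows "0 \<le> poly_norm (Espace smul) q"
proof -
  have "norm (q 0) \<le> poly_norm (Espace smul) q"
    by (rule norm_le_poly_norm[OF assms]) simp
  then show ?thesis
    using norm_ge_zero[of "q 0"] by linarith
qed

lemma norm_le_poly_norm_mult:
  assumes "q \<in> cont_hom_polys n"
  shows "norm (q y) \<le> poly_norm (Espace smul) q * norm y ^ n"
proof (cases "y = 0")
  case True
  then show ?thesis
    using norm_le_poly_norm[OF assms, of 0] hom_poly_homogeneous(2)[of n q 0 0] assms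
    by (cases n) (auto simp: mem_cont_hom_polys)
next
  case False
  define u where "u = (1 / norm y) *\<^sub>R y"
  have "y = norm y *\<^sub>R u"
    using False by (simp add: u_def)
  then have "norm (q y) = norm y ^ n * norm (q u)"
    using assms hom_poly_homogeneous(2)[of n q "norm y" u]
    by (metis mem_cont_hom_polys norm_mult norm_of_real norm_power abs_norm_cancel)
  also have "\<dots> \<le> norm y ^ n * poly_norm (Espace smul) q"
    using norm_le_poly_norm[OF assms, of u] False by (intro mult_left_mono) (auto simp: u_def)
  finally show ?thesis
    by (simp add: mult.commute)
qed

lemma cont_hom_polys_diff:
  assumes "q \<in> cont_hom_polys n" "q' \<in> cont_hom_polys n"
  shows "(\<lambda>x. q' x - q x) \<in> cont_hom_polys n"
proof -
  obtain A A' where "K_multilinear n A" "\<And>x. q x = A (replicate n x)"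
    "K_multilinear n A'" "\<And>x. q' x = A' (replicate n x)"
    using assms by (meson mem_cont_hom_polys hom_poly_Espace_Kspace)
  then have "K_multilinear n (\<lambda>xs. A' xs - A xs)" "\<And>x. q' x - q x = A' (replicate n x) - A (replicate n x)"
    by (auto simp: K_multilinear_def algebra_simps)
  moreover have "continuous_on UNIV (\<lambda>x. q' x - q x)"
    using assms by (intro continuous_intros) (simp_all add: mem_cont_hom_polys)
  ultimately show ?thesis
    unfolding mem_cont_hom_polys hom_poly_Espace_Kspace by blast
qed

lemma zero_in_cont_hom_polys: "(\<lambda>_. 0) \<in> cont_hom_polys n"
proof -
  have "K_multilinear n (\<lambda>_. 0)"
    by (simp add: K_multilinear_def)
  then show ?thesis
    unfolding mem_cont_hom_polys hom_poly_Espace_Kspace by auto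
qed

lemma norm_K_multilinear_update_le:
  assumes A: "K_multilinear n A" "length zs = n" "k < n"
    and bound: "\<And>u. norm u = 1 \<Longrightarrow> norm (A (zs[k := u])) \<le> K"
  shows "norm (A (zs[k := v])) \<le> K * norm v"
proof (cases "v = 0")
  case True
  then show ?thesis
    using K_multilinear_zero[OF A] by simp
next
  case False
  define u where "u = (1 / norm v) *\<^sub>R v"
  have "v = smul (of_real (norm v)) u"
    using False by (simp add: smul_of_real u_def)
  then have "A (zs[k := v]) = of_real (norm v) * A (zs[k := u])"
    by (metis K_multilinear_smul[OF A])
  moreover have "norm (A (zs[k := u])) \<le> K"
    using False by (intro bound) (simp add: u_def)
  ultimately show ?thesis
    using mult_left_mono[of "norm (A (zs[k := u]))" K "norm v"] by (simp add: norm_mult mult.commute)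
qed

lemma K_multilinear_diff_bound:
  assumes A: "K_multilinear n A" and "norm x \<le> R" "norm y \<le> R"
    and bound: "\<And>zs. length zs = n \<Longrightarrow> (\<And>i. i < n \<Longrightarrow> norm (zs ! i) \<le> max 1 R) \<Longrightarrow> norm (A zs) \<le> K"
  shows "norm (A (replicate n y) - A (replicate n x)) \<le> real n * K * norm (y - x)"
proof -
  define Z where "Z k = replicate k y @ replicate (n - k) x" for k
  have "norm (A (Z (Suc k)) - A (Z k)) \<le> K * norm (y - x)" if k: "k < n" for k
  proof -
    obtain m where m: "n - k = Suc m" "n - Suc k = m"
      using k by (metis Suc_diff_Suc)
    have len: "length (Z k) = n"
      using k by (simp add: Z_def)
    have "Z (Suc k) = (Z k)[k := y]" "Z k = (Z k)[k := x]"
      unfolding Z_def m by (simp_all add: list_update_append replicate_app_Cons_same)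
    then have "A (Z (Suc k)) - A (Z k) = A ((Z k)[k := y - x])"
      using K_multilinear_add[OF A len k, of x "y - x"] by simp
    moreover have "norm (A ((Z k)[k := u])) \<le> K" if "norm u = 1" for u
    proof (rule bound)
      show "norm ((Z k)[k := u] ! i) \<le> max 1 R" if "i < n" for i
      proof -
        have "(Z k)[k := u] ! i \<in> insert u (set (Z k))"
          using \<open>i < n\<close> len set_update_subset_insert nth_mem by (metis length_list_update subsetD)
        moreover have "set (Z k) \<subseteq> {x, y}"
          by (auto simp: Z_def)
        ultimately show ?thesis
          using assms(2,3) \<open>norm u = 1\<close> by auto
      qed
    qed (simp add: len)
    ultimately show ?thesis
      using norm_K_multilinear_update_le[OF A len k] by simp
  qed
  then have "norm (\<Sum>k<n. A (Z (Suc k)) - A (Z k)) \<le> (\<Sum>k<n. K * norm (y - x))"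
    by (intro sum_norm_le) auto
  moreover have "A (replicate n y) - A (replicate n x) = (\<Sum>k<n. A (Z (Suc k)) - A (Z k))"
    by (subst sum_lessThan_telescope) (simp add: Z_def)
  ultimately show ?thesis
    by (simp add: mult.assoc)
qed

lemma cont_hom_polys_lipschitz:
  assumes q: "q \<in> cont_hom_polys n" "poly_norm (Espace smul) q \<le> 1"
    and "norm x \<le> R" "norm y \<le> R"
  shows "norm (q y - q x) \<le> real n * (2 ^ n * (real n * max 1 R) ^ n) * norm (y - x)"
proof -
  have hom: "hom_poly (Espace smul) Kspace n q"
    using q by (simp add: mem_cont_hom_polys)
  have "norm (polarization q (replicate n y) - polarization q (replicate n x))
      \<le> real n * (2 ^ n * (real n * max 1 R) ^ n) * norm (y - x)"
  proof (rule K_multilinear_diff_bound[OF hom_poly_polarization(1)[OF hom]])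
    fix zs :: "'e list"
    assume zs: "length zs = n" "\<And>i. i < n \<Longrightarrow> norm (zs ! i) \<le> max 1 R"
    have sum_bound: "(\<Sum>i<n. norm (zs ! i)) ^ n \<le> (real n * max 1 R) ^ n"
      using zs(2) sum_mono[of "{..<n}" "\<lambda>i. norm (zs ! i)" "\<lambda>_. max 1 R"]
      by (intro power_mono) (auto simp: sum_nonneg)
    have "norm (polarization q zs) \<le> 2 ^ n * poly_norm (Espace smul) q * (\<Sum>i<n. norm (zs ! i)) ^ n"
      using norm_polarization_le[OF norm_le_poly_norm_mult[OF q(1)] poly_norm_nonneg[OF q(1)] zs(1)] .
    also have "\<dots> \<le> 2 ^ n * 1 * (real n * max 1 R) ^ n"
      using q(2) sum_bound by (intro mult_mono mult_left_mono) (auto simp: sum_nonneg)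
    finally show "norm (polarization q zs) \<le> 2 ^ n * (real n * max 1 R) ^ n"
      by simp
  qed (use assms in auto)
  then show ?thesis
    using hom_poly_polarization(2)[OF hom] by simp
qed

end

section \<open>The map \<open>J\<close>\<close>

lemma multilinear_map_prod:
  assumes "\<And>k a b. k < m \<Longrightarrow> a \<in> spc_carrier V \<Longrightarrow> b \<in> spc_carrier V \<Longrightarrow> F k (spc_add V a b) = F k a + F k b"
    and "\<And>k c a. k < m \<Longrightarrow> a \<in> spc_carrier V \<Longrightarrow> F k (spc_smul V c a) = c * F k a"
  shows "multilinear_map V Kspace m (\<lambda>vs. \<Prod>k<m. F k (vs ! k))"
proof -
  have update: "(\<Prod>k<m. F k (vs[i := a] ! k)) = F i a * (\<Prod>k\<in>{..<m} - {i}. F k (vs ! k))"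
    if "length vs = m" "i < m" for vs i a
    using that by (simp add: prod.remove[of "{..<m}" i])
  show ?thesis
    unfolding multilinear_map_def using assms by (simp add: update Kspace_def algebra_simps)
qed

lemma less_imp_mult_add_le: "k < (m::nat) \<Longrightarrow> k * n + n \<le> m * n"
  by (metis add.commute mult_Suc less_eq_Suc_le mult_le_mono1)

definition chunk :: "nat \<Rightarrow> nat \<Rightarrow> 'a list \<Rightarrow> 'a list" where
  "chunk n k xs = take n (drop (k * n) xs)"

lemma length_chunk: "length xs = m * n \<Longrightarrow> k < m \<Longrightarrow> length (chunk n k xs) = n"
  using less_imp_mult_add_le[of k m n] by (simp add: chunk_def)

lemma chunk_replicate: "k < m \<Longrightarrow> chunk n k (replicate (m * n) x) = replicate n x"
  using less_imp_mult_add_le[of k m n] by (simp add: chunk_def min_def)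

lemma set_chunk_subset: "set (chunk n k xs) \<subseteq> set xs"
  unfolding chunk_def by (meson set_drop_subset set_take_subset order.trans)

lemma sum_norm_chunk_le:
  fixes xs :: "'a::real_normed_vector list"
  assumes "length xs = m * n" "k < m"
  shows "(\<Sum>i<n. norm (chunk n k xs ! i)) \<le> real n * (\<Sum>x\<in>set xs. norm x)"
proof -
  have "norm (chunk n k xs ! i) \<le> (\<Sum>x\<in>set xs. norm x)" if "i < n" for i
  proof -
    have "i < length (chunk n k xs)"
      using length_chunk[OF assms] that by simp
    then have "chunk n k xs ! i \<in> set xs"
      using set_chunk_subset by (meson nth_mem subsetD)
    then show ?thesis
      by (rule member_le_sum) auto
  qed
  then show ?thesis
    using sum_mono[of "{..<n}" "\<lambda>i. norm (chunk n k xs ! i)" "\<lambda>_. \<Sum>x\<in>set xs. norm x"] by simp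
qed

lemma chunk_list_update:
  assumes len: "length xs = m * n" and i: "i < m * n" and k: "k < m"
  shows "chunk n k (xs[i := v]) = (if k = i div n then (chunk n k xs)[i mod n := v] else chunk n k xs)"
proof -
  have "n > 0"
    using i by (cases n) auto
  define k\<^sub>0 where "k\<^sub>0 = i div n"
  define r where "r = i mod n"
  have ir: "i = k\<^sub>0 * n + r" "r < n"
    using \<open>n > 0\<close> by (auto simp: k\<^sub>0_def r_def)
  consider "k = k\<^sub>0" | "k < k\<^sub>0" | "k\<^sub>0 < k"
    by linarith
  then show ?thesis
  proof cases
    case 1
    have "drop (k * n) (xs[i := v]) = (drop (k * n) xs)[r := v]"
      using ir 1 by (simp add: drop_update_swap)
    then show ?thesis
      using 1 by (simp add: chunk_def take_update_swap k\<^sub>0_def r_def)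
  next
    case 2
    then have le: "k * n \<le> i" "n \<le> i - k * n"
      using ir less_imp_mult_add_le[of k k\<^sub>0 n] by auto
    then have "chunk n k (xs[i := v]) = (chunk n k xs)[i - k * n := v]"
      by (simp add: chunk_def drop_update_swap take_update_swap)
    also have "\<dots> = chunk n k xs"
      using le length_chunk[OF len k] by (intro list_update_beyond) simp
    finally show ?thesis
      using 2 by (simp add: k\<^sub>0_def)
  next
    case 3
    then have "i < k * n"
      using ir less_imp_mult_add_le[of k\<^sub>0 k n] by linarith
    then show ?thesis
      using 3 by (simp add: chunk_def k\<^sub>0_def)
  qed
qed

lemma norm_prod_diff_le:
  fixes a b :: "nat \<Rightarrow> 'k::real_normed_field"
  assumes "\<And>k. k < m \<Longrightarrow> norm (a k) \<le> R" "\<And>k. k < m \<Longrightarrow> norm (b k) \<le> R"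
    and "\<And>k. k < m \<Longrightarrow> norm (a k - b k) \<le> D"
  shows "norm ((\<Prod>k<m. a k) - (\<Prod>k<m. b k)) \<le> real m * R ^ (m - 1) * D"
  using assms
proof (induction m)
  case (Suc m)
  have "0 \<le> R" "0 \<le> D"
    using Suc.prems(1,3)[of 0] norm_ge_zero order.trans by blast+
  have "(\<Prod>k<m. norm (a k)) \<le> (\<Prod>k<m. R)"
    using Suc.prems(1) by (intro prod_mono) auto
  then have norm_prod: "norm (\<Prod>k<m. a k) \<le> R ^ m"
    by (simp add: prod_norm)
  have "(\<Prod>k<Suc m. a k) - (\<Prod>k<Suc m. b k)
      = (\<Prod>k<m. a k) * (a m - b m) + ((\<Prod>k<m. a k) - (\<Prod>k<m. b k)) * b m"
    by (simp add: algebra_simps)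
  then have "norm ((\<Prod>k<Suc m. a k) - (\<Prod>k<Suc m. b k))
      \<le> norm (\<Prod>k<m. a k) * norm (a m - b m) + norm ((\<Prod>k<m. a k) - (\<Prod>k<m. b k)) * norm (b m)"
    by (metis norm_mult norm_triangle_ineq)
  also have "\<dots> \<le> R ^ m * D + (real m * R ^ (m - 1) * D) * R"
    using norm_prod Suc \<open>0 \<le> R\<close> \<open>0 \<le> D\<close> by (intro add_mono mult_mono) auto
  also have "\<dots> = real (Suc m) * R ^ (Suc m - 1) * D"
    by (cases m) (auto simp: algebra_simps)
  finally show ?case .
qed simp

lemma eps_delta_of_lipschitz:
  fixes D d :: "'a \<Rightarrow> real"
  assumes "0 \<le> K" "0 < r" "\<And>y. y \<in> S \<Longrightarrow> d y < r \<Longrightarrow> D y \<le> K * d y" "0 < e"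
  shows "\<exists>\<delta>>0. \<forall>y\<in>S. d y < \<delta> \<longrightarrow> D y < e"
proof (intro exI conjI ballI impI)
  show "0 < min r (e / (K + 1))"
    using assms by simp
  fix y
  assume "y \<in> S" and y: "d y < min r (e / (K + 1))"
  have "K * d y \<le> K * (e / (K + 1))"
    using y assms(1) by (intro mult_left_mono) auto
  also have "\<dots> < e"
    using assms by (simp add: field_simps)
  finally show "D y < e"
    using assms(3)[OF \<open>y \<in> S\<close>] y by linarith
qed

context K_banach_space
begin

lemma spc_diff_Pspace [simp]: "spc_diff (Pspace V j) P Q = (\<lambda>x. P x - Q x)"
  by (simp add: spc_diff_def Pspace_def)

lemma Pspace_simps [simp]:
  "spc_norm (Pspace V j) = poly_norm V"
  "spc_add (Pspace V j) P Q = (\<lambda>x. P x + Q x)"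
  "spc_smul (Pspace V j) c P = (\<lambda>x. c * P x)"
  by (simp_all add: Pspace_def)

lemma spc_carrier_Pspace_Espace [simp]: "spc_carrier (Pspace (Espace smul) n) = cont_hom_polys n"
  by (simp add: cont_hom_polys_def)

definition J_multilinear :: "nat \<Rightarrow> nat \<Rightarrow> 'e list \<Rightarrow> ('e \<Rightarrow> 'k) \<Rightarrow> 'k" where
  "J_multilinear m n xs q =
     (if q \<in> cont_hom_polys n then \<Prod>k<m. polarization q (chunk n k xs) else 0)"

lemma Jmap_eq_J_multilinear: "Jmap smul m n x = J_multilinear m n (replicate (m * n) x)"
proof
  fix q
  have "polarization q (chunk n k (replicate (m * n) x)) = q x" if "q \<in> cont_hom_polys n" "k < m" for k
    using that hom_poly_polarization(2) by (simp add: chunk_replicate mem_cont_hom_polys)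
  then show "Jmap smul m n x q = J_multilinear m n (replicate (m * n) x) q"
    by (simp add: Jmap_def J_multilinear_def)
qed

lemma J_multilinear_update:
  assumes len: "length xs = m * n" and i: "i < m * n" and q: "q \<in> cont_hom_polys n"
  shows "J_multilinear m n (xs[i := v]) q = polarization q ((chunk n (i div n) xs)[i mod n := v])
    * (\<Prod>k\<in>{..<m} - {i div n}. polarization q (chunk n k xs))"
proof -
  have "i div n < m"
    using i by (simp add: less_mult_imp_div_less)
  have "(\<Prod>k\<in>{..<m} - {i div n}. polarization q (chunk n k (xs[i := v])))
      = (\<Prod>k\<in>{..<m} - {i div n}. polarization q (chunk n k xs))"
    by (rule prod.cong) (auto simp: chunk_list_update[OF len i])
  moreover have "chunk n (i div n) (xs[i := v]) = (chunk n (i div n) xs)[i mod n := v]"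
    using chunk_list_update[OF len i \<open>i div n < m\<close>] by simp
  ultimately show ?thesis
    using q \<open>i div n < m\<close> by (simp add: J_multilinear_def prod.remove[of "{..<m}" "i div n"])
qed

lemma J_multilinear_add_smul:
  assumes len: "length xs = m * n" and i: "i < m * n"
  shows "J_multilinear m n (xs[i := a + b]) = (\<lambda>q. J_multilinear m n (xs[i := a]) q + J_multilinear m n (xs[i := b]) q)"
    and "J_multilinear m n (xs[i := smul c a]) = (\<lambda>q. c * J_multilinear m n (xs[i := a]) q)"
proof -
  have "n > 0" "i div n < m"
    using i by (auto simp: less_mult_imp_div_less intro: Nat.gr0I)
  then have block: "length (chunk n (i div n) xs) = n" "i mod n < n"
    using length_chunk[OF len] by auto
  have ml: "K_multilinear n (polarization q)" if "q \<in> cont_hom_polys n" for q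
    using that hom_poly_polarization(1) by (simp add: mem_cont_hom_polys)
  show "J_multilinear m n (xs[i := a + b]) = (\<lambda>q. J_multilinear m n (xs[i := a]) q + J_multilinear m n (xs[i := b]) q)"
  proof
    fix q
    show "J_multilinear m n (xs[i := a + b]) q = J_multilinear m n (xs[i := a]) q + J_multilinear m n (xs[i := b]) q"
    proof (cases "q \<in> cont_hom_polys n")
      case True
      then show ?thesis
        by (simp add: J_multilinear_update[OF len i True] K_multilinear_add[OF ml[OF True] block] algebra_simps)
    qed (simp add: J_multilinear_def)
  qed
  show "J_multilinear m n (xs[i := smul c a]) = (\<lambda>q. c * J_multilinear m n (xs[i := a]) q)"
  proof
    fix q
    show "J_multilinear m n (xs[i := smul c a]) q = c * J_multilinear m n (xs[i := a]) q"
    proof (cases "q \<in> cont_hom_polys n")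
      case True
      then show ?thesis
        by (simp add: J_multilinear_update[OF len i True] K_multilinear_smul[OF ml[OF True] block])
    qed (simp add: J_multilinear_def)
  qed
qed

lemma hom_poly_J_multilinear: "hom_poly (Pspace (Espace smul) n) Kspace m (J_multilinear m n xs)"
proof -
  have "multilinear_map (Pspace (Espace smul) n) Kspace m (\<lambda>qs. \<Prod>k<m. polarization (qs ! k) (chunk n k xs))"
    by (rule multilinear_map_prod) (simp_all add: Pspace_def polarization_add polarization_mult)
  then show ?thesis
    unfolding hom_poly_def
    by (intro exI[of _ "\<lambda>qs. \<Prod>k<m. polarization (qs ! k) (chunk n k xs)"])
      (simp add: J_multilinear_def Pspace_def cont_hom_polys_def)
qed

lemma norm_polarization_chunk_diff_le:
  assumes q: "q \<in> cont_hom_polys n" "q' \<in> cont_hom_polys n" and "length xs = m * n" "k < m"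
  shows "norm (polarization q' (chunk n k xs) - polarization q (chunk n k xs))
    \<le> 2 ^ n * (real n * (\<Sum>x\<in>set xs. norm x)) ^ n * poly_norm (Espace smul) (\<lambda>x. q' x - q x)"
proof -
  have diff: "(\<lambda>x. q' x - q x) \<in> cont_hom_polys n"
    using cont_hom_polys_diff[OF q] .
  have "(\<Sum>i<n. norm (chunk n k xs ! i)) ^ n \<le> (real n * (\<Sum>x\<in>set xs. norm x)) ^ n"
    using sum_norm_chunk_le[OF assms(3,4)] by (intro power_mono) (auto simp: sum_nonneg)
  moreover have "norm (polarization (\<lambda>x. q' x - q x) (chunk n k xs))
      \<le> 2 ^ n * poly_norm (Espace smul) (\<lambda>x. q' x - q x) * (\<Sum>i<n. norm (chunk n k xs ! i)) ^ n"
    by (rule norm_polarization_le[OF norm_le_poly_norm_mult[OF diff] poly_norm_nonneg[OF diff]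
          length_chunk[OF assms(3,4)]])
  ultimately show ?thesis
    using poly_norm_nonneg[OF diff]
    by (simp add: polarization_diff mult_ac) (meson order.trans mult_left_mono zero_le_mult_iff zero_le_power zero_le_numeral)
qed

lemma J_multilinear_continuous:
  assumes len: "length xs = m * n"
  shows "spc_continuous (Pspace (Espace smul) n) Kspace (J_multilinear m n xs)"
  unfolding spc_continuous_def
proof (intro ballI allI impI)
  fix q :: "'e \<Rightarrow> 'k" and e :: real
  assume "q \<in> spc_carrier (Pspace (Espace smul) n)" "0 < e"
  then have q: "q \<in> cont_hom_polys n"
    by simp
  define C where "C = 2 ^ n * (real n * (\<Sum>x\<in>set xs. norm x)) ^ n + 1"
  have "C > 0"
    unfolding C_def by (simp add: add_nonneg_pos sum_nonneg)
  define b where "b k = polarization q (chunk n k xs)" for k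
  define R where "R = 1 + (\<Sum>k<m. norm (b k))"
  have "1 \<le> R"
    by (simp add: R_def sum_nonneg)
  have b_le: "norm (b k) \<le> R - 1" if "k < m" for k
    using member_le_sum[of k "{..<m}" "\<lambda>k. norm (b k)"] that by (simp add: R_def)
  have "\<exists>d>0. \<forall>q'\<in>cont_hom_polys n. poly_norm (Espace smul) (\<lambda>x. q' x - q x) < d
      \<longrightarrow> norm (J_multilinear m n xs q' - J_multilinear m n xs q) < e"
  proof (rule eps_delta_of_lipschitz[where K = "real m * R ^ (m - 1) * C" and r = "1 / C"])
    fix q'
    assume q': "q' \<in> cont_hom_polys n" and small: "poly_norm (Espace smul) (\<lambda>x. q' x - q x) < 1 / C"
    define a where "a k = polarization q' (chunk n k xs)" for k
    define \<delta> where "\<delta> = poly_norm (Espace smul) (\<lambda>x. q' x - q x)"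
    have "0 \<le> \<delta>"
      unfolding \<delta>_def using poly_norm_nonneg[OF cont_hom_polys_diff[OF q q']] .
    have ab: "norm (a k - b k) \<le> C * \<delta>" if "k < m" for k
    proof -
      have "norm (a k - b k) \<le> 2 ^ n * (real n * (\<Sum>x\<in>set xs. norm x)) ^ n * \<delta>"
        unfolding a_def b_def \<delta>_def by (rule norm_polarization_chunk_diff_le[OF q q' len that])
      also have "\<dots> \<le> C * \<delta>"
        using \<open>0 \<le> \<delta>\<close> by (simp add: C_def algebra_simps)
      finally show ?thesis .
    qed
    have "C * \<delta> \<le> 1"
      using small \<open>C > 0\<close> by (simp add: \<delta>_def field_simps)
    then have "norm (a k) \<le> R" "norm (b k) \<le> R" if "k < m" for k
      using ab[OF that] b_le[OF that] norm_triangle_ineq2[of "a k" "b k"] by linarith+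
    then have "norm ((\<Prod>k<m. a k) - (\<Prod>k<m. b k)) \<le> real m * R ^ (m - 1) * (C * \<delta>)"
      using ab by (intro norm_prod_diff_le) auto
    then show "norm (J_multilinear m n xs q' - J_multilinear m n xs q)
        \<le> real m * R ^ (m - 1) * C * poly_norm (Espace smul) (\<lambda>x. q' x - q x)"
      using q q' by (simp add: J_multilinear_def a_def b_def \<delta>_def mult.assoc)
  qed (use \<open>1 \<le> R\<close> \<open>C > 0\<close> \<open>0 < e\<close> in auto)
  then show "\<exists>d>0. \<forall>q'\<in>spc_carrier (Pspace (Espace smul) n).
      spc_norm (Pspace (Espace smul) n) (spc_diff (Pspace (Espace smul) n) q' q) < d \<longrightarrow>
      spc_norm Kspace (spc_diff Kspace (J_multilinear m n xs q') (J_multilinear m n xs q)) < e"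
    by simp
qed

lemma J_multilinear_mem_Pspace:
  assumes "length xs = m * n"
  shows "J_multilinear m n xs \<in> spc_carrier (Pspace (Pspace (Espace smul) n) m)"
proof -
  have "spc_carrier (Pspace (Pspace (Espace smul) n) m) = {P. cont_hom_poly (Pspace (Espace smul) n) Kspace m P
      \<and> (\<forall>q. q \<notin> cont_hom_polys n \<longrightarrow> P q = 0)}"
    by (simp only: Pspace_def[of "Pspace (Espace smul) n" m] kspace.select_convs spc_carrier_Pspace_Espace)
  then show ?thesis
    using hom_poly_J_multilinear J_multilinear_continuous[OF assms]
    by (simp add: cont_hom_poly_def J_multilinear_def)
qed

lemma multilinear_map_J_multilinear:
  "multilinear_map (Espace smul) (Pspace (Pspace (Espace smul) n) m) (m * n) (J_multilinear m n)"
  unfolding multilinear_map_def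
  using J_multilinear_mem_Pspace J_multilinear_add_smul by simp

lemma Jmap_apply: "Jmap smul m n x q = (if q \<in> cont_hom_polys n then q x ^ m else 0)"
  by (simp add: Jmap_def)

lemma norm_Pspace_Pspace:
  "spc_norm (Pspace (Pspace (Espace smul) n) m) P
     = Sup {norm (P q) | q. q \<in> cont_hom_polys n \<and> poly_norm (Espace smul) q \<le> 1}"
  by (simp add: poly_norm_def[of "Pspace (Espace smul) n"])

lemma norm_le_power_if_poly_norm_le_1:
  assumes "q \<in> cont_hom_polys n" "poly_norm (Espace smul) q \<le> 1"
  shows "norm (q x) \<le> norm x ^ n"
  using norm_le_poly_norm_mult[OF assms(1), of x] assms(2) mult_right_mono[OF assms(2), of "norm x ^ n"]
  by simp

lemma power_of_functional_mem_cont_hom_polys: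
  assumes "K_linear \<phi>" "\<And>y. norm (\<phi> y) \<le> norm y"
  shows "(\<lambda>z. \<phi> z ^ n) \<in> cont_hom_polys n" "poly_norm (Espace smul) (\<lambda>z. \<phi> z ^ n) \<le> 1"
proof -
  have "multilinear_map (Espace smul) Kspace n (\<lambda>zs. \<Prod>k<n. \<phi> (zs ! k))"
    using assms(1) by (intro multilinear_map_prod) (simp_all add: K_linear_def)
  then have "hom_poly (Espace smul) Kspace n (\<lambda>z. \<phi> z ^ n)"
    unfolding multilinear_map_Espace_Kspace hom_poly_Espace_Kspace by force
  moreover have "continuous_on UNIV (\<lambda>z. \<phi> z ^ n)"
    using K_linear_bounded_linear[OF assms] by (intro continuous_intros linear_continuous_on)
  ultimately show "(\<lambda>z. \<phi> z ^ n) \<in> cont_hom_polys n"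
    by (simp add: mem_cont_hom_polys)
  have "norm (\<phi> x ^ n) \<le> 1" if "norm x \<le> 1" for x
    using assms(2)[of x] that by (simp add: norm_power power_le_one)
  then show "poly_norm (Espace smul) (\<lambda>z. \<phi> z ^ n) \<le> 1"
    unfolding poly_norm_Espace by (intro cSup_least) (auto intro: exI[of _ "0::'e"])
qed

lemma Jmap_lipschitz:
  assumes q: "q \<in> cont_hom_polys n" "poly_norm (Espace smul) q \<le> 1"
    and "norm x \<le> R" "norm y \<le> R"
  shows "norm (q y ^ m - q x ^ m)
    \<le> real m * (max 1 R ^ n) ^ (m - 1) * (real n * (2 ^ n * (real n * max 1 R) ^ n)) * norm (y - x)"
proof -
  have "norm (q z) \<le> max 1 R ^ n" if "norm z \<le> R" for z
    using norm_le_power_if_poly_norm_le_1[OF q, of z] that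
    by (meson max.cobounded2 norm_ge_zero order.trans power_mono)
  then have "norm ((\<Prod>k<m. q y) - (\<Prod>k<m. q x)) \<le> real m * (max 1 R ^ n) ^ (m - 1) * norm (q y - q x)"
    using assms by (intro norm_prod_diff_le) auto
  also have "\<dots> \<le> real m * (max 1 R ^ n) ^ (m - 1) * (real n * (2 ^ n * (real n * max 1 R) ^ n) * norm (y - x))"
    using cont_hom_polys_lipschitz[OF q assms(3,4)] by (intro mult_left_mono) auto
  finally show ?thesis
    by (simp add: mult.assoc)
qed

lemma Jmap_continuous:
  "spc_continuous (Espace smul) (Pspace (Pspace (Espace smul) n) m) (Jmap smul m n)"
  unfolding spc_continuous_def
proof (intro ballI allI impI)
  fix x :: 'e and e :: real
  assume "0 < e"
  define R where "R = norm x + 1"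
  define K where "K = real m * (max 1 R ^ n) ^ (m - 1) * (real n * (2 ^ n * (real n * max 1 R) ^ n))"
  have "0 \<le> K"
    by (simp add: K_def)
  have "\<exists>d>0. \<forall>y\<in>UNIV. norm (y - x) < d \<longrightarrow>
      spc_norm (Pspace (Pspace (Espace smul) n) m) (\<lambda>q. Jmap smul m n y q - Jmap smul m n x q) < e"
  proof (rule eps_delta_of_lipschitz[OF \<open>0 \<le> K\<close> zero_less_one _ \<open>0 < e\<close>])
    fix y :: 'e
    assume "norm (y - x) < 1"
    then have "norm x \<le> R" "norm y \<le> R"
      using norm_triangle_ineq2[of y x] by (auto simp: R_def)
    then have "norm (Jmap smul m n y q - Jmap smul m n x q) \<le> K * norm (y - x)"
      if "q \<in> cont_hom_polys n" "poly_norm (Espace smul) q \<le> 1" for q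
      using Jmap_lipschitz[OF that] that by (simp add: Jmap_apply K_def)
    moreover have "(\<lambda>_. 0) \<in> cont_hom_polys n" "poly_norm (Espace smul) (\<lambda>_::'e. 0::'k) \<le> 1"
      using zero_in_cont_hom_polys power_of_functional_mem_cont_hom_polys[of "\<lambda>_. 0" 1]
      by (simp_all add: K_linear_def)
    ultimately show "spc_norm (Pspace (Pspace (Espace smul) n) m) (\<lambda>q. Jmap smul m n y q - Jmap smul m n x q)
        \<le> K * norm (y - x)"
      unfolding norm_Pspace_Pspace by (intro cSup_least) auto
  qed
  then show "\<exists>d>0. \<forall>y\<in>spc_carrier (Espace smul). spc_norm (Espace smul) (spc_diff (Espace smul) y x) < d \<longrightarrow>
      spc_norm (Pspace (Pspace (Espace smul) n) m)
        (spc_diff (Pspace (Pspace (Espace smul) n) m) (Jmap smul m n y) (Jmap smul m n x)) < e"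
    by simp
qed

lemma norm_Jmap: "spc_norm (Pspace (Pspace (Espace smul) n) m) (Jmap smul m n x) = norm x ^ (m * n)"
proof -
  obtain \<phi> where \<phi>: "K_linear \<phi>" "\<And>y. norm (\<phi> y) \<le> norm y" "norm (\<phi> x) = norm x"
    using norming_functional by blast
  note \<phi>_pow = power_of_functional_mem_cont_hom_polys[OF \<phi>(1,2)]
  have upper: "norm (Jmap smul m n x q) \<le> norm x ^ (m * n)"
    if "q \<in> cont_hom_polys n" "poly_norm (Espace smul) q \<le> 1" for q
  proof -
    have "norm (q x) ^ m \<le> (norm x ^ n) ^ m"
      using norm_le_power_if_poly_norm_le_1[OF that, of x] by (intro power_mono) auto
    then show ?thesis
      using that by (simp add: Jmap_apply norm_power power_mult[symmetric] mult.commute)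
  qed
  have attained: "norm (Jmap smul m n x (\<lambda>z. \<phi> z ^ n)) = norm x ^ (m * n)"
    using \<phi>_pow \<phi>(3) by (simp add: Jmap_apply norm_power power_mult[symmetric] mult.commute)
  show ?thesis
    unfolding norm_Pspace_Pspace
  proof (rule antisym)
    show "Sup {norm (Jmap smul m n x q) | q. q \<in> cont_hom_polys n \<and> poly_norm (Espace smul) q \<le> 1}
        \<le> norm x ^ (m * n)"
      using \<phi>_pow upper by (intro cSup_least) auto
    show "norm x ^ (m * n)
        \<le> Sup {norm (Jmap smul m n x q) | q. q \<in> cont_hom_polys n \<and> poly_norm (Espace smul) q \<le> 1}"
      unfolding attained[symmetric] using \<phi>_pow upper
      by (intro cSup_upper) (auto intro!: bdd_aboveI[of _ "norm x ^ (m * n)"])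
  qed
qed

end

theorem mainTheorem7:
  fixes smul :: "'k::{real_normed_field, banach} \<Rightarrow> 'e::banach \<Rightarrow> 'e"
    and m n :: nat
  assumes "K_banach_scaling smul"
  shows "cont_hom_poly (Espace smul) (Pspace (Pspace (Espace smul) n) m) (m * n) (Jmap smul m n)
       \<and> (\<forall>x. spc_norm (Pspace (Pspace (Espace smul) n) m) (Jmap smul m n x) = norm x ^ (m * n))"
proof -
  interpret K_banach_space smul
    using assms by unfold_locales
  have "hom_poly (Espace smul) (Pspace (Pspace (Espace smul) n) m) (m * n) (Jmap smul m n)"
    unfolding hom_poly_def using multilinear_map_J_multilinear Jmap_eq_J_multilinear by auto
  then show ?thesis
    using Jmap_continuous norm_Jmap by (simp add: cont_hom_poly_def)
qed

end
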